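(* There is no $d$-dimensional ($d\ge4$) conformally flat Lorentzian spacetime with Ricci tensor $R_{ab}=\lambda g_{ab}+\eta\ell_a\ell_b$ ($\ell$ null, $\eta$ nowhere vanishing) for which $\ell$ is twisting (i.e. the optical matrix $\rho_{ij}=m_{(i)}^am_{(j)}^b\nabla_b\ell_a$ has nonzero antisymmetric part).
   Context: Null frame $\{\ell,n,m_{(i)}\}$: $\ell\cdot\ell=n\cdot n=\ell\cdot m_{(i)}=n\cdot m_{(i)}=0$, $\ell\cdot n=1$, $m_{(i)}\cdot m_{(j)}=\delta_{ij}$. Conformally flat: Weyl tensor vanishes. *)

theory Defs
  imports "HOL-Analysis.Analysis"
begin

text \<open>A spacetime region is an open set U of
  coordinates in real^'n (dimension d = CARD('n)); the metric is given by its
  components g a b :: real^'n \<Rightarrow> real in these coordinates.\<close>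

type_synonym 'n field = "real^'n \<Rightarrow> real"

definition pd :: "('n::finite) \<Rightarrow> 'n field \<Rightarrow> 'n field" where
  "pd k f x = frechet_derivative f (at x) (axis k 1)"

fun smooth_k :: "nat \<Rightarrow> (real^('n::finite)) set \<Rightarrow> 'n field \<Rightarrow> bool" where
  "smooth_k 0 U f = continuous_on U f"
| "smooth_k (Suc k) U f = (f differentiable_on U \<and> (\<forall>i. smooth_k k U (pd i f)))"

definition smooth_on_U :: "(real^('n::finite)) set \<Rightarrow> 'n field \<Rightarrow> bool" where
  "smooth_on_U U f = (\<forall>k. smooth_k k U f)"

type_synonym 'n metric = "'n \<Rightarrow> 'n \<Rightarrow> 'n field"

definition gmat :: "'n metric \<Rightarrow> real^'n \<Rightarrow> real^'n^'n" where
  "gmat g x = (\<chi> a b. g a b x)"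

definition ginv :: "('n::finite) metric \<Rightarrow> 'n metric" where
  "ginv g a b x = matrix_inv (gmat g x) $ a $ b"

definition lorentzian_at :: "('n::finite) metric \<Rightarrow> real^'n \<Rightarrow> bool" where
  "lorentzian_at g x \<longleftrightarrow> (\<forall>a b. g a b x = g b a x) \<and>
     (\<exists>P::real^'n^'n. invertible P \<and> (\<exists>i0. \<forall>a b.
        (transpose P ** gmat g x ** P) $ a $ b =
          (if a = b then (if a = i0 then -1 else 1) else 0)))"

definition christoffel :: "('n::finite) metric \<Rightarrow> 'n \<Rightarrow> 'n \<Rightarrow> 'n \<Rightarrow> 'n field" where
  "christoffel g a b c x = (1/2) * (\<Sum>e\<in>UNIV. ginv g a e x *
      (pd b (g e c) x + pd c (g e b) x - pd e (g b c) x))"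

definition riemann_up :: "('n::finite) metric \<Rightarrow> 'n \<Rightarrow> 'n \<Rightarrow> 'n \<Rightarrow> 'n \<Rightarrow> 'n field" where
  "riemann_up g a b c d x =
     pd c (christoffel g a d b) x - pd d (christoffel g a c b) x
     + (\<Sum>e\<in>UNIV. christoffel g a c e x * christoffel g e d b x
                 - christoffel g a d e x * christoffel g e c b x)"

definition riemann :: "('n::finite) metric \<Rightarrow> 'n \<Rightarrow> 'n \<Rightarrow> 'n \<Rightarrow> 'n \<Rightarrow> 'n field" where
  "riemann g a b c d x = (\<Sum>e\<in>UNIV. g a e x * riemann_up g e b c d x)"

definition ricci :: "('n::finite) metric \<Rightarrow> 'n metric" where
  "ricci g b d x = (\<Sum>a\<in>UNIV. riemann_up g a b a d x)"

definition scalar_curv :: "('n::finite) metric \<Rightarrow> 'n field" where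
  "scalar_curv g x = (\<Sum>b\<in>UNIV. \<Sum>d\<in>UNIV. ginv g b d x * ricci g b d x)"

definition weyl :: "('n::finite) metric \<Rightarrow> 'n \<Rightarrow> 'n \<Rightarrow> 'n \<Rightarrow> 'n \<Rightarrow> 'n field" where
  "weyl g a b c d x = (let n = real CARD('n); Ric = (\<lambda>p q. ricci g p q x);
      G = (\<lambda>p q. g p q x) in
     riemann g a b c d x
     - (G a c * Ric d b - G a d * Ric c b - G b c * Ric d a + G b d * Ric c a) / (n - 2)
     + scalar_curv g x * (G a c * G d b - G a d * G c b) / ((n - 1) * (n - 2)))"

definition conformally_flat_on :: "('n::finite) metric \<Rightarrow> (real^'n) set \<Rightarrow> bool" where
  "conformally_flat_on g U \<longleftrightarrow> (\<forall>x\<in>U. \<forall>a b c d. weyl g a b c d x = 0)"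

definition gdot :: "('n::finite) metric \<Rightarrow> real^'n \<Rightarrow> real^'n \<Rightarrow> real^'n \<Rightarrow> real" where
  "gdot g x u v = (\<Sum>a\<in>UNIV. \<Sum>b\<in>UNIV. g a b x * u $ a * v $ b)"

definition raise :: "('n::finite) metric \<Rightarrow> ('n \<Rightarrow> 'n field) \<Rightarrow> real^'n \<Rightarrow> real^'n" where
  "raise g l x = (\<chi> a. \<Sum>b\<in>UNIV. ginv g a b x * l b x)"

definition cov_deriv :: "('n::finite) metric \<Rightarrow> ('n \<Rightarrow> 'n field) \<Rightarrow> 'n \<Rightarrow> 'n \<Rightarrow> 'n field" where
  "cov_deriv g l b a x = pd b (l a) x - (\<Sum>c\<in>UNIV. christoffel g c b a x * l c x)"

definition null_frame :: "('n::finite) metric \<Rightarrow> real^'n \<Rightarrow> real^'n \<Rightarrow> real^'n \<Rightarrow> (nat \<Rightarrow> real^'n) \<Rightarrow> bool" where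
  "null_frame g x L N M \<longleftrightarrow>
     gdot g x L L = 0 \<and> gdot g x N N = 0 \<and> gdot g x L N = 1 \<and>
     (\<forall>i < CARD('n) - 2. gdot g x L (M i) = 0 \<and> gdot g x N (M i) = 0) \<and>
     (\<forall>i < CARD('n) - 2. \<forall>j < CARD('n) - 2.
        gdot g x (M i) (M j) = (if i = j then 1 else 0))"

definition optical_matrix :: "('n::finite) metric \<Rightarrow> ('n \<Rightarrow> 'n field) \<Rightarrow> real^'n \<Rightarrow> (nat \<Rightarrow> real^'n) \<Rightarrow> nat \<Rightarrow> nat \<Rightarrow> real" where
  "optical_matrix g l x M i j =
     (\<Sum>a\<in>UNIV. \<Sum>b\<in>UNIV. M i $ a * M j $ b * cov_deriv g l b a x)"

definition twisting_at :: "('n::finite) metric \<Rightarrow> ('n \<Rightarrow> 'n field) \<Rightarrow> real^'n \<Rightarrow> bool" where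
  "twisting_at g l x \<longleftrightarrow> (\<exists>N M. null_frame g x (raise g l x) N M \<and>
     (\<exists>i < CARD('n) - 2. \<exists>j < CARD('n) - 2.
        optical_matrix g l x M i j \<noteq> optical_matrix g l x M j i))"

end

theory Submission
  imports Defs
begin

text \<open>Where the Weyl tensor vanishes, the Riemann tensor is built from the Ricci tensor.
  Substituting this into the contracted Bianchi identity
  \<open>\<nabla>\<^sub>a R\<^sup>a\<^sub>b\<^sub>c\<^sub>d = \<nabla>\<^sub>c R\<^sub>b\<^sub>d - \<nabla>\<^sub>d R\<^sub>b\<^sub>c\<close> and contracting
  with \<open>n\<^sup>b m\<^sub>i\<^sup>c m\<^sub>j\<^sup>d\<close>, the terms carrying the metric drop out because
  \<open>n\<close> is orthogonal to the \<open>m\<^sub>i\<close>, and the contracted curl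
  \<open>\<nabla>\<^sub>c R\<^sub>d\<^sub>b - \<nabla>\<^sub>d R\<^sub>c\<^sub>b\<close> turns out to be \<open>1/(d-2)\<close> times itself, hence zero
  for \<open>d \<ge> 4\<close>. On the other hand, for \<open>R\<^sub>a\<^sub>b = \<lambda> g\<^sub>a\<^sub>b + \<eta> \<ell>\<^sub>a \<ell>\<^sub>b\<close> with
  \<open>\<ell>\<close> null, the scalar curvature is \<open>d \<lambda>\<close>, so \<open>\<lambda>\<close> is smooth and its term
  drops out as well, while \<open>\<ell>\<^sub>a n\<^sup>a = 1\<close> and \<open>\<ell>\<^sub>a m\<^sub>i\<^sup>a = 0\<close> leave
  \<open>\<eta> (\<rho>\<^sub>j\<^sub>i - \<rho>\<^sub>i\<^sub>j)\<close>. As \<open>\<eta> \<noteq> 0\<close>, the optical matrix is symmetric.\<close>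

section \<open>Partial derivatives and smooth functions\<close>

lemma frechet_derivative_cong_open:
  assumes "open U" "y \<in> U" "\<forall>z\<in>U. f z = h z"
  shows "frechet_derivative f (at y) = frechet_derivative h (at y)"
proof -
  have "(f has_derivative D) (at y) \<longleftrightarrow> (h has_derivative D) (at y)" for D
    using has_derivative_transform_within_open[where s=U and f=f and g=h]
      has_derivative_transform_within_open[where s=U and f=h and g=f] assms by auto
  then show ?thesis unfolding frechet_derivative_def by simp
qed

lemma pd_cong_open:
  assumes "open U" "y \<in> U" "\<forall>z\<in>U. f z = h z"
  shows "pd i f y = pd i h y"
  unfolding pd_def using frechet_derivative_cong_open[OF assms] by simp

lemma differentiable_cong_open:
  assumes "open U" "z \<in> U" "\<forall>w\<in>U. f w = h w" "f differentiable (at z)"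
  shows "h differentiable (at z)"
  using assms has_derivative_transform_within_open[where s=U and f=f and g=h] unfolding differentiable_def by blast

lemma smooth_k_cong_open:
  assumes "open U" "\<forall>z\<in>U. f z = h z" "smooth_k k U f"
  shows "smooth_k k U h"
  using assms(2,3)
proof (induction k arbitrary: f h)
  case 0
  then show ?case using continuous_on_cong by (metis smooth_k.simps(1))
next
  case (Suc k)
  have "f differentiable_on U" using Suc.prems(2) by simp
  then have "h differentiable_on U"
    using Suc.prems(1) differentiable_cong_open[OF assms(1)]
    unfolding differentiable_on_eq_differentiable_at[OF assms(1)] by blast
  moreover have "smooth_k k U (pd i h)" for i
    using Suc pd_cong_open[OF assms(1)] by (metis smooth_k.simps(2))
  ultimately show ?case by simp
qed

lemma smooth_k_SucD: "smooth_k (Suc k) U f \<Longrightarrow> smooth_k k U f"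
  by (induction k arbitrary: f) (auto intro: differentiable_imp_continuous_on)

lemma smooth_on_U_cong_open:
  assumes "open U" "\<forall>z\<in>U. f z = h z" "smooth_on_U U f"
  shows "smooth_on_U U h"
  using assms smooth_k_cong_open unfolding smooth_on_U_def by blast

lemma smooth_pd: "smooth_on_U U f \<Longrightarrow> smooth_on_U U (pd i f)"
  unfolding smooth_on_U_def by (metis smooth_k.simps(2))

lemma smooth_imp_differentiable:
  assumes "smooth_on_U U f" "open U" "y \<in> U"
  shows "f differentiable (at y)"
proof -
  have "smooth_k (Suc 0) U f" using assms(1) unfolding smooth_on_U_def by blast
  then show ?thesis using differentiable_on_eq_differentiable_at[OF assms(2)] assms(3) by auto
qed

lemma smooth_imp_continuous_on: "smooth_on_U U f \<Longrightarrow> continuous_on U f"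
  unfolding smooth_on_U_def by (metis smooth_k.simps(1))

lemma pd_eq_derivative:
  assumes "(f has_derivative F) (at y)"
  shows "pd i f y = F (axis i 1)"
  unfolding pd_def using frechet_derivative_at[OF assms] by simp

lemma pd_add:
  assumes "f differentiable (at y)" "h differentiable (at y)"
  shows "pd i (\<lambda>z. f z + h z) y = pd i f y + pd i h y"
  using pd_eq_derivative[OF has_derivative_add[OF assms[unfolded frechet_derivative_works]]]
  unfolding pd_def by simp

lemma pd_diff:
  assumes "f differentiable (at y)" "h differentiable (at y)"
  shows "pd i (\<lambda>z. f z - h z) y = pd i f y - pd i h y"
  using pd_eq_derivative[OF has_derivative_diff[OF assms[unfolded frechet_derivative_works]]]
  unfolding pd_def by simp

lemma pd_mult:
  assumes "f differentiable (at y)" "h differentiable (at y)"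
  shows "pd i (\<lambda>z. f z * h z) y = f y * pd i h y + pd i f y * h y"
  using pd_eq_derivative[OF has_derivative_mult[OF assms[unfolded frechet_derivative_works]]]
  unfolding pd_def by simp

lemma pd_const: "pd i (\<lambda>z. c) y = 0"
  using pd_eq_derivative[OF has_derivative_const[of c "at y"], of i] by simp

lemma pd_cmult:
  assumes "f differentiable (at y)"
  shows "pd i (\<lambda>z. c * f z) y = c * pd i f y"
  using pd_mult[OF _ assms, of "\<lambda>_. c"] by (simp add: pd_const)

lemma pd_inverse:
  assumes "f differentiable (at y)" "f y \<noteq> 0"
  shows "pd i (\<lambda>z. inverse (f z)) y = - (inverse (f y) * pd i f y * inverse (f y))"
  using pd_eq_derivative[OF Deriv.has_derivative_inverse[OF assms(2) assms(1)[unfolded frechet_derivative_works]]]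
  unfolding pd_def by simp

lemma pd_sum:
  assumes "finite A" "\<forall>a\<in>A. f a differentiable (at y)"
  shows "pd i (\<lambda>z. \<Sum>a\<in>A. f a z) y = (\<Sum>a\<in>A. pd i (f a) y)"
proof -
  have "((\<lambda>z. \<Sum>a\<in>A. f a z) has_derivative (\<lambda>v. \<Sum>a\<in>A. frechet_derivative (f a) (at y) v)) (at y)"
    using assms by (intro has_derivative_sum) (auto simp: frechet_derivative_works)
  from pd_eq_derivative[OF this] show ?thesis unfolding pd_def by simp
qed

lemma smooth_k_const: "smooth_k k (U :: (real^'n::finite) set) (\<lambda>z. c)"
proof (induction k arbitrary: c)
  case (Suc k)
  have "pd i (\<lambda>z::real^'n. c) = (\<lambda>z. 0)" for i by (simp add: pd_const fun_eq_iff)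
  then show ?case using Suc by simp
qed simp

lemma smooth_k_add:
  assumes "open U"
  shows "smooth_k k U f \<Longrightarrow> smooth_k k U h \<Longrightarrow> smooth_k k U (\<lambda>z. f z + h z)"
proof (induction k arbitrary: f h)
  case (Suc k)
  have "smooth_k k U (pd i (\<lambda>z. f z + h z))" for i
  proof (rule smooth_k_cong_open[OF assms])
    have "f differentiable_on U" "h differentiable_on U" using Suc.prems by simp_all
    then show "\<forall>z\<in>U. pd i f z + pd i h z = pd i (\<lambda>z. f z + h z) z"
      unfolding differentiable_on_eq_differentiable_at[OF assms] by (simp add: pd_add)
    show "smooth_k k U (\<lambda>z. pd i f z + pd i h z)"
      using Suc.IH Suc.prems by simp
  qed
  then show ?case using Suc.prems by (simp add: differentiable_on_add)
qed (simp add: continuous_on_add)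

lemma smooth_k_mult:
  assumes "open U"
  shows "smooth_k k U f \<Longrightarrow> smooth_k k U h \<Longrightarrow> smooth_k k U (\<lambda>z. f z * h z)"
proof (induction k arbitrary: f h)
  case (Suc k)
  have "smooth_k k U (pd i (\<lambda>z. f z * h z))" for i
  proof (rule smooth_k_cong_open[OF assms])
    have "f differentiable_on U" "h differentiable_on U" using Suc.prems by simp_all
    then show "\<forall>z\<in>U. f z * pd i h z + pd i f z * h z = pd i (\<lambda>z. f z * h z) z"
      unfolding differentiable_on_eq_differentiable_at[OF assms] by (simp add: pd_mult)
    have "smooth_k k U f" "smooth_k k U h" "smooth_k k U (pd i f)" "smooth_k k U (pd i h)"
      using Suc.prems smooth_k_SucD by auto
    then show "smooth_k k U (\<lambda>z. f z * pd i h z + pd i f z * h z)"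
      using Suc.IH smooth_k_add[OF assms] by blast
  qed
  then show ?case using Suc.prems by simp
qed (simp add: continuous_on_mult)

lemma smooth_k_inverse:
  assumes "open U" "\<forall>z\<in>U. f z \<noteq> 0"
  shows "smooth_k k U f \<Longrightarrow> smooth_k k U (\<lambda>z. inverse (f z))"
proof (induction k)
  case 0
  then show ?case using assms(2) by (auto intro!: continuous_on_inverse)
next
  case (Suc k)
  have "smooth_k k U (pd i (\<lambda>z. inverse (f z)))" for i
  proof (rule smooth_k_cong_open[OF assms(1)])
    have "f differentiable_on U" using Suc.prems by simp
    then show "\<forall>z\<in>U. - 1 * (inverse (f z) * pd i f z * inverse (f z)) = pd i (\<lambda>z. inverse (f z)) z"
      using assms(2) unfolding differentiable_on_eq_differentiable_at[OF assms(1)] by (simp add: pd_inverse)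
    have "smooth_k k U (\<lambda>z. inverse (f z))" "smooth_k k U (pd i f)"
      using Suc smooth_k_SucD by auto
    then show "smooth_k k U (\<lambda>z. - 1 * (inverse (f z) * pd i f z * inverse (f z)))"
      by (intro smooth_k_mult[OF assms(1)] smooth_k_const)
  qed
  then show ?case using Suc.prems assms by simp
qed

lemma smooth_const: "smooth_on_U U (\<lambda>z. c)"
  unfolding smooth_on_U_def using smooth_k_const by blast

lemma smooth_add:
  assumes "open U" "smooth_on_U U f" "smooth_on_U U h"
  shows "smooth_on_U U (\<lambda>z. f z + h z)"
  using assms(2,3) smooth_k_add[OF assms(1), of _ f h] unfolding smooth_on_U_def by blast

lemma smooth_mult:
  assumes "open U" "smooth_on_U U f" "smooth_on_U U h"
  shows "smooth_on_U U (\<lambda>z. f z * h z)"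
  using assms(2,3) smooth_k_mult[OF assms(1), of _ f h] unfolding smooth_on_U_def by blast

lemma smooth_inverse:
  assumes "open U" "\<forall>z\<in>U. f z \<noteq> 0" "smooth_on_U U f"
  shows "smooth_on_U U (\<lambda>z. inverse (f z))"
  using assms(3) smooth_k_inverse[OF assms(1,2)] unfolding smooth_on_U_def by blast

lemma smooth_cmult: "open U \<Longrightarrow> smooth_on_U U f \<Longrightarrow> smooth_on_U U (\<lambda>z. c * f z)"
  by (rule smooth_mult[OF _ smooth_const])

lemma smooth_minus: "open U \<Longrightarrow> smooth_on_U U f \<Longrightarrow> smooth_on_U U (\<lambda>z. - f z)"
  using smooth_cmult[of U f "-1"] by simp

lemma smooth_diff:
  assumes "open U" "smooth_on_U U f" "smooth_on_U U h"
  shows "smooth_on_U U (\<lambda>z. f z - h z)"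
  using smooth_add[OF assms(1,2) smooth_cmult[OF assms(1,3), of "-1"]] by simp

lemma smooth_divide:
  assumes "open U" "\<forall>z\<in>U. h z \<noteq> 0" "smooth_on_U U f" "smooth_on_U U h"
  shows "smooth_on_U U (\<lambda>z. f z / h z)"
  using smooth_mult[OF assms(1,3) smooth_inverse[OF assms(1,2,4)]] by (simp add: divide_inverse)

lemma smooth_sum:
  assumes "open U" "finite A" "\<forall>a\<in>A. smooth_on_U U (f a)"
  shows "smooth_on_U U (\<lambda>z. \<Sum>a\<in>A. f a z)"
  using assms(2,3) by (induction A rule: finite_induct) (simp_all add: smooth_const smooth_add[OF assms(1)])

lemma smooth_prod:
  assumes "open U" "finite A" "\<forall>a\<in>A. smooth_on_U U (f a)"
  shows "smooth_on_U U (\<lambda>z. \<Prod>a\<in>A. f a z)"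
  using assms(2,3) by (induction A rule: finite_induct) (simp_all add: smooth_const smooth_mult[OF assms(1)])

lemma has_real_derivative_along_axis:
  fixes \<phi> :: "real^'n::finite \<Rightarrow> real"
  assumes "\<phi> differentiable (at (p + t *\<^sub>R axis k 1))"
  shows "((\<lambda>s. \<phi> (p + s *\<^sub>R axis k 1)) has_real_derivative pd k \<phi> (p + t *\<^sub>R axis k 1)) (at t)"
proof -
  let ?e = "axis k (1::real)"
  let ?D = "frechet_derivative \<phi> (at (p + t *\<^sub>R ?e))"
  have line: "((\<lambda>s. p + s *\<^sub>R ?e) has_derivative (\<lambda>h. h *\<^sub>R ?e)) (at t)"
    by (auto intro!: derivative_eq_intros)
  have d: "(\<phi> has_derivative ?D) (at (p + t *\<^sub>R ?e))"
    using assms frechet_derivative_works by blast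
  have "((\<phi> \<circ> (\<lambda>s. p + s *\<^sub>R ?e)) has_derivative (?D \<circ> (\<lambda>h. h *\<^sub>R ?e))) (at t)"
    by (rule diff_chain_at[OF line]) (simp add: d)
  moreover have "?D \<circ> (\<lambda>h. h *\<^sub>R ?e) = (\<lambda>h. ?D ?e * h)"
    using linear_scale[OF has_derivative_linear[OF d]] by (auto simp: o_def mult.commute)
  ultimately show ?thesis unfolding has_field_derivative_def pd_def by (simp add: o_def)
qed

lemma second_difference_mvt:
  fixes f :: "real^'n::finite \<Rightarrow> real"
  assumes U: "open U" "ball y r \<subseteq> U" "0 < h" "2*h < r"
    and df: "f differentiable_on U" and dfi: "pd i f differentiable_on U"
  shows "\<exists>\<xi>. dist \<xi> y < 2*h \<and>
     f (y + h *\<^sub>R axis i 1 + h *\<^sub>R axis j 1) - f (y + h *\<^sub>R axis i 1) - f (y + h *\<^sub>R axis j 1) + f y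
       = h^2 * pd j (pd i f) \<xi>"
proof -
  let ?ei = "axis i (1::real)" and ?ej = "axis j (1::real)"
  have near: "dist (y + s *\<^sub>R ?ei + t *\<^sub>R ?ej) y \<le> s + t" if "0 \<le> s" "0 \<le> t" for s t
  proof -
    have "norm (s *\<^sub>R ?ei + t *\<^sub>R ?ej) \<le> norm (s *\<^sub>R ?ei) + norm (t *\<^sub>R ?ej)"
      by (rule norm_triangle_ineq)
    then show ?thesis using that by (simp add: dist_norm)
  qed
  have inU: "y + s *\<^sub>R ?ei + t *\<^sub>R ?ej \<in> U" if "0 \<le> s" "s \<le> h" "0 \<le> t" "t \<le> h" for s t
  proof -
    have "dist y (y + s *\<^sub>R ?ei + t *\<^sub>R ?ej) < r"
      using near[of s t] that U(4) by (simp add: dist_commute)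
    then show ?thesis using U(2) by auto
  qed
  have dfa: "\<forall>z\<in>U. f differentiable (at z)" and dfia: "\<forall>z\<in>U. pd i f differentiable (at z)"
    using df dfi differentiable_on_eq_differentiable_at[OF U(1)] by blast+
  define u where "u s = f (y + h *\<^sub>R ?ej + s *\<^sub>R ?ei) - f (y + s *\<^sub>R ?ei)" for s
  have du: "DERIV u s :> pd i f (y + h *\<^sub>R ?ej + s *\<^sub>R ?ei) - pd i f (y + s *\<^sub>R ?ei)"
    if "0 \<le> s" "s \<le> h" for s
  proof -
    have "y + h *\<^sub>R ?ej + s *\<^sub>R ?ei \<in> U" "y + s *\<^sub>R ?ei \<in> U"
      using inU[of s h] inU[of s 0] that U(3) by (simp_all add: algebra_simps)
    then show ?thesis unfolding u_def
      by (intro DERIV_diff has_real_derivative_along_axis) (use dfa in auto)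
  qed
  obtain \<sigma> where \<sigma>: "0 < \<sigma>" "\<sigma> < h"
    "u h - u 0 = (h - 0) * (pd i f (y + h *\<^sub>R ?ej + \<sigma> *\<^sub>R ?ei) - pd i f (y + \<sigma> *\<^sub>R ?ei))"
    using MVT2[OF U(3) du] by auto
  define v where "v t = pd i f (y + \<sigma> *\<^sub>R ?ei + t *\<^sub>R ?ej)" for t
  have dv: "DERIV v t :> pd j (pd i f) (y + \<sigma> *\<^sub>R ?ei + t *\<^sub>R ?ej)" if "0 \<le> t" "t \<le> h" for t
    unfolding v_def using inU[of \<sigma> t] that \<sigma> dfia by (intro has_real_derivative_along_axis) auto
  obtain \<tau> where \<tau>: "0 < \<tau>" "\<tau> < h"
    "v h - v 0 = (h - 0) * pd j (pd i f) (y + \<sigma> *\<^sub>R ?ei + \<tau> *\<^sub>R ?ej)"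
    using MVT2[OF U(3) dv] by auto
  have "f (y + h *\<^sub>R ?ei + h *\<^sub>R ?ej) - f (y + h *\<^sub>R ?ei) - f (y + h *\<^sub>R ?ej) + f y = u h - u 0"
    unfolding u_def by (simp add: algebra_simps)
  also have "\<dots> = h * (v h - v 0)"
    using \<sigma>(3) unfolding v_def by (simp add: algebra_simps)
  also have "\<dots> = h^2 * pd j (pd i f) (y + \<sigma> *\<^sub>R ?ei + \<tau> *\<^sub>R ?ej)"
    using \<tau>(3) by (simp add: power2_eq_square)
  finally have "f (y + h *\<^sub>R ?ei + h *\<^sub>R ?ej) - f (y + h *\<^sub>R ?ei) - f (y + h *\<^sub>R ?ej) + f y
      = h^2 * pd j (pd i f) (y + \<sigma> *\<^sub>R ?ei + \<tau> *\<^sub>R ?ej)" .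
  moreover have "dist (y + \<sigma> *\<^sub>R ?ei + \<tau> *\<^sub>R ?ej) y < 2*h"
    using near[of \<sigma> \<tau>] \<sigma> \<tau> by simp
  ultimately show ?thesis by blast
qed

text \<open>Schwarz's theorem: both mixed partials are values of the same second difference
  quotient at points near \<open>y\<close>, so continuity at \<open>y\<close> makes them equal.\<close>

lemma pd_commute:
  fixes f :: "real^'n::finite \<Rightarrow> real"
  assumes U: "open U" "y \<in> U" and sf: "smooth_on_U U f"
  shows "pd i (pd j f) y = pd j (pd i f) y"
proof (rule ccontr)
  assume ne: "pd i (pd j f) y \<noteq> pd j (pd i f) y"
  define \<delta> where "\<delta> = \<bar>pd i (pd j f) y - pd j (pd i f) y\<bar> / 2"
  have \<delta>: "\<delta> > 0" using ne unfolding \<delta>_def by simp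
  obtain r where r: "r > 0" "ball y r \<subseteq> U" using U open_contains_ball by blast
  have s2: "smooth_k 2 U f" using sf unfolding smooth_on_U_def by blast
  have df: "f differentiable_on U" and dfi: "pd i f differentiable_on U"
    and dfj: "pd j f differentiable_on U"
    using s2 by (simp_all add: numeral_2_eq_2)
  have "continuous_on U (pd j (pd i f))" "continuous_on U (pd i (pd j f))"
    using s2 by (simp_all add: numeral_2_eq_2)
  then have "isCont (pd j (pd i f)) y" "isCont (pd i (pd j f)) y"
    using continuous_on_eq_continuous_at[OF U(1)] U(2) by blast+
  then obtain \<rho>1 \<rho>2 where \<rho>: "\<rho>1 > 0" "\<rho>2 > 0"
    "\<forall>z. dist z y < \<rho>1 \<longrightarrow> dist (pd j (pd i f) z) (pd j (pd i f) y) < \<delta>"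
    "\<forall>z. dist z y < \<rho>2 \<longrightarrow> dist (pd i (pd j f) z) (pd i (pd j f) y) < \<delta>"
    using \<delta> unfolding continuous_at_eps_delta by blast
  define h where "h = min r (min \<rho>1 \<rho>2) / 4"
  have h: "0 < h" "2*h < r" "2*h < \<rho>1" "2*h < \<rho>2" using r \<rho> unfolding h_def by auto
  obtain \<xi> where \<xi>: "dist \<xi> y < 2*h"
    "f (y + h *\<^sub>R axis i 1 + h *\<^sub>R axis j 1) - f (y + h *\<^sub>R axis i 1) - f (y + h *\<^sub>R axis j 1) + f y
       = h^2 * pd j (pd i f) \<xi>"
    using second_difference_mvt[OF U(1) r(2) h(1,2) df dfi] by blast
  obtain \<zeta> where \<zeta>: "dist \<zeta> y < 2*h"
    "f (y + h *\<^sub>R axis j 1 + h *\<^sub>R axis i 1) - f (y + h *\<^sub>R axis j 1) - f (y + h *\<^sub>R axis i 1) + f y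
       = h^2 * pd i (pd j f) \<zeta>"
    using second_difference_mvt[OF U(1) r(2) h(1,2) df dfj] by blast
  have "h^2 * pd j (pd i f) \<xi> = h^2 * pd i (pd j f) \<zeta>"
    using \<xi>(2) \<zeta>(2) by (simp add: algebra_simps)
  then have "pd j (pd i f) \<xi> = pd i (pd j f) \<zeta>" using h(1) by simp
  then have "pd i (pd j f) y - pd j (pd i f) y
      = (pd i (pd j f) y - pd i (pd j f) \<zeta>) + (pd j (pd i f) \<xi> - pd j (pd i f) y)"
    by simp
  then have "\<bar>pd i (pd j f) y - pd j (pd i f) y\<bar>
      \<le> \<bar>pd i (pd j f) y - pd i (pd j f) \<zeta>\<bar> + \<bar>pd j (pd i f) \<xi> - pd j (pd i f) y\<bar>"
    using abs_triangle_ineq by simp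
  moreover have "\<bar>pd j (pd i f) \<xi> - pd j (pd i f) y\<bar> < \<delta>" "\<bar>pd i (pd j f) y - pd i (pd j f) \<zeta>\<bar> < \<delta>"
    using \<rho> \<xi>(1) \<zeta>(1) h by (simp_all add: dist_real_def abs_minus_commute)
  ultimately show False unfolding \<delta>_def by (smt (verit) field_sum_of_halves)
qed

section \<open>Metric algebra\<close>

lemma delta_simps:
  fixes y z :: "'a::comm_semiring_1"
  shows "(if P then 1 else 0) * y = (if P then y else 0)"
    and "y * (if P then z else 0) = (if P then y * z else 0)"
    and "(if P then z else 0) * y = (if P then z * y else 0)"
    and "(\<Sum>f\<in>A. if P then h f else 0) = (if P then (\<Sum>f\<in>A. h f) else 0)"
  by simp_all

definition semi_riemannian_at :: "('n::finite) metric \<Rightarrow> real^'n \<Rightarrow> bool" where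
  "semi_riemannian_at g x \<longleftrightarrow> (\<forall>a b. g a b x = g b a x) \<and> invertible (gmat g x)"

lemma lorentzian_imp_semi_riemannian:
  assumes "lorentzian_at g x"
  shows "semi_riemannian_at g x"
proof -
  obtain P :: "real^'a^'a" and i0 where P: "invertible P"
    and D: "\<forall>a b. (transpose P ** gmat g x ** P) $ a $ b = (if a = b then (if a = i0 then -1 else 1) else 0)"
    using assms unfolding lorentzian_at_def by blast
  have "det (transpose P ** gmat g x ** P) = (\<Prod>i\<in>UNIV. (transpose P ** gmat g x ** P) $ i $ i)"
    by (rule det_diagonal) (simp add: D)
  also have "\<dots> = (\<Prod>i\<in>UNIV. (if i = i0 then -1 else 1::real))"
    using D by simp
  finally have "det (transpose P ** gmat g x ** P) \<noteq> 0"
    by (simp add: prod.If_cases)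
  then have "det (gmat g x) \<noteq> 0" by (simp add: det_mul)
  then show ?thesis
    using assms unfolding semi_riemannian_at_def lorentzian_at_def by (simp add: invertible_det_nz)
qed

lemma matrix_inv_right_left:
  fixes A :: "real^'n^'n"
  assumes "invertible A"
  shows "A ** matrix_inv A = mat 1 \<and> matrix_inv A ** A = mat 1"
  using assms someI_ex[of "\<lambda>A'. A ** A' = mat 1 \<and> A' ** A = mat 1"]
  unfolding invertible_def matrix_inv_def by blast

lemma ginv_mult_metric:
  assumes "semi_riemannian_at g x"
  shows "(\<Sum>e\<in>UNIV. ginv g a e x * g e b x) = (if a = b then 1 else 0)"
proof -
  have "(matrix_inv (gmat g x) ** gmat g x) $ a $ b = (if a = b then 1 else 0)"
    using matrix_inv_right_left[of "gmat g x"] assms unfolding semi_riemannian_at_def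
    by (simp add: mat_def)
  then show ?thesis by (simp add: matrix_matrix_mult_def ginv_def gmat_def)
qed

lemma ginv_sym:
  assumes "semi_riemannian_at g x"
  shows "ginv g a b x = ginv g b a x"
proof -
  let ?G = "gmat g x" let ?H = "matrix_inv ?G"
  have sym: "transpose ?G = ?G"
    using assms unfolding semi_riemannian_at_def by (simp add: transpose_def gmat_def vec_eq_iff)
  have inv: "?G ** ?H = mat 1" "?H ** ?G = mat 1"
    using matrix_inv_right_left assms unfolding semi_riemannian_at_def by auto
  have "?G ** transpose ?H = mat 1"
    using arg_cong[OF inv(2), of transpose] sym by (simp add: matrix_transpose_mul)
  then have "?H ** (?G ** transpose ?H) = ?H" by simp
  then have "transpose ?H = ?H" by (simp add: matrix_mul_assoc inv(2))
  then have "transpose ?H $ a $ b = ?H $ a $ b" by simp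
  then show ?thesis by (simp add: transpose_def ginv_def)
qed

lemma matrix_inv_cramer:
  fixes A :: "real^'n^'n"
  assumes "invertible A"
  shows "matrix_inv A $ a $ b = det (\<chi> i j. if j = a then axis b 1 $ i else A$i$j) / det A"
proof -
  have "A *v (matrix_inv A *v axis b 1) = axis b 1"
    using matrix_inv_right_left[OF assms] by (simp add: matrix_vector_mul_assoc)
  then have "matrix_inv A *v axis b 1 = (\<chi> k. det(\<chi> i j. if j=k then axis b 1 $ i else A$i$j) / det A)"
    using cramer assms invertible_det_nz by blast
  moreover have "(matrix_inv A *v axis b 1) $ a = matrix_inv A $ a $ b"
    by (simp add: matrix_vector_mult_def axis_def if_distrib if_distribR cong: if_cong)
  ultimately show ?thesis by simp
qed

lemma smooth_det:
  fixes M :: "real^'n \<Rightarrow> real^'m::finite^'m"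
  assumes "open U" "\<forall>i j. smooth_on_U U (\<lambda>y. M y $ i $ j)"
  shows "smooth_on_U U (\<lambda>y. det (M y))"
  unfolding det_def
  by (intro smooth_sum[OF assms(1)] ballI smooth_cmult[OF assms(1)] smooth_prod[OF assms(1)])
     (use assms(2) in auto)

lemma gdot_raise:
  assumes "semi_riemannian_at g x"
  shows "gdot g x (raise g l x) v = (\<Sum>b\<in>UNIV. v$b * l b x)"
proof -
  have "gdot g x (raise g l x) v
      = (\<Sum>a\<in>UNIV. \<Sum>b\<in>UNIV. \<Sum>c\<in>UNIV. v$b * l c x * (ginv g c a x * g a b x))"
    unfolding gdot_def raise_def using ginv_sym[OF assms]
    by (simp add: sum_distrib_left sum_distrib_right mult_ac)
  also have "\<dots> = (\<Sum>b\<in>UNIV. \<Sum>c\<in>UNIV. v$b * l c x * (\<Sum>a\<in>UNIV. ginv g c a x * g a b x))"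
    by (subst sum.swap, rule sum.cong[OF refl], subst sum.swap) (simp add: sum_distrib_left)
  also have "\<dots> = (\<Sum>b\<in>UNIV. v$b * l b x)"
    by (simp add: ginv_mult_metric[OF assms] delta_simps)
  finally show ?thesis .
qed

lemma riemann_up_eq_ginv_riemann:
  assumes "semi_riemannian_at g y"
  shows "riemann_up g a b c d y = (\<Sum>e\<in>UNIV. ginv g a e y * riemann g e b c d y)"
proof -
  have "(\<Sum>e\<in>UNIV. ginv g a e y * riemann g e b c d y)
      = (\<Sum>e\<in>UNIV. \<Sum>f\<in>UNIV. ginv g a e y * g e f y * riemann_up g f b c d y)"
    unfolding riemann_def by (simp add: sum_distrib_left mult_ac)
  also have "\<dots> = (\<Sum>f\<in>UNIV. (\<Sum>e\<in>UNIV. ginv g a e y * g e f y) * riemann_up g f b c d y)"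
    by (subst sum.swap) (simp add: sum_distrib_right)
  finally show ?thesis by (simp add: ginv_mult_metric[OF assms] delta_simps)
qed

lemma scalar_curv_ricci_null:
  fixes g :: "('n::finite) metric"
  assumes "semi_riemannian_at g y"
    and "gdot g y (raise g l y) (raise g l y) = 0"
    and "\<forall>a b. ricci g a b y = lam * g a b y + eta * l a y * l b y"
  shows "scalar_curv g y = real CARD('n) * lam"
proof -
  have trace_g: "(\<Sum>b\<in>UNIV. \<Sum>d\<in>UNIV. ginv g b d y * g b d y) = real CARD('n)"
  proof -
    have "(\<Sum>d\<in>UNIV. ginv g b d y * g b d y) = 1" for b
      using ginv_mult_metric[OF assms(1), of b b] assms(1) unfolding semi_riemannian_at_def by simp
    then show ?thesis by simp
  qed
  have trace_ll: "(\<Sum>b\<in>UNIV. \<Sum>d\<in>UNIV. ginv g b d y * (l b y * l d y)) = 0"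
  proof -
    have "(\<Sum>b\<in>UNIV. (raise g l y)$b * l b y) = 0"
      using assms(2) unfolding gdot_raise[OF assms(1)] .
      then have "(\<Sum>b\<in>UNIV. (\<Sum>d\<in>UNIV. ginv g b d y * l d y) * l b y) = 0"
      unfolding raise_def by simp
    then show ?thesis by (simp add: sum_distrib_left sum_distrib_right mult_ac)
  qed
  have "scalar_curv g y = lam * (\<Sum>b\<in>UNIV. \<Sum>d\<in>UNIV. ginv g b d y * g b d y)
      + eta * (\<Sum>b\<in>UNIV. \<Sum>d\<in>UNIV. ginv g b d y * (l b y * l d y))"
    unfolding scalar_curv_def using assms(3)
    by (simp add: sum.distrib sum_distrib_left algebra_simps)
  then show ?thesis unfolding trace_g trace_ll by simp
qed

section \<open>Smooth metrics and the Levi-Civita connection\<close>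

locale smooth_metric =
  fixes g :: "('n::finite) metric" and U :: "(real^'n) set"
  assumes open_U: "open U"
    and smooth_g: "smooth_on_U U (g a b)"
    and semi_riemannian: "y \<in> U \<Longrightarrow> semi_riemannian_at g y"
begin

lemma metric_sym: "y \<in> U \<Longrightarrow> g a b y = g b a y"
  using semi_riemannian unfolding semi_riemannian_at_def by blast

lemma pd_metric_sym: "y \<in> U \<Longrightarrow> pd k (g a b) y = pd k (g b a) y"
  by (rule pd_cong_open[OF open_U]) (auto intro: metric_sym)

lemma smooth_ginv: "smooth_on_U U (ginv g a b)"
proof -
  let ?Ma = "\<lambda>y. \<chi> i j. if j = a then axis b 1 $ i else gmat g y $ i $ j"
  have cramer: "\<forall>y\<in>U. det (?Ma y) / det (gmat g y) = ginv g a b y"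
  proof
    fix y assume "y \<in> U"
    then have "invertible (gmat g y)" using semi_riemannian unfolding semi_riemannian_at_def by blast
    from matrix_inv_cramer[OF this, of a b] show "det (?Ma y) / det (gmat g y) = ginv g a b y"
      by (simp add: ginv_def)
  qed
  have nz: "\<forall>y\<in>U. det (gmat g y) \<noteq> 0"
    using semi_riemannian invertible_det_nz unfolding semi_riemannian_at_def by blast
  have "smooth_on_U U (\<lambda>y. det (gmat g y))"
    by (rule smooth_det[OF open_U]) (simp add: gmat_def smooth_g)
  moreover have "smooth_on_U U (\<lambda>y. det (?Ma y))"
  proof (rule smooth_det[OF open_U], intro allI)
    fix i j
    show "smooth_on_U U (\<lambda>y. ?Ma y $ i $ j)"
      by (cases "j = a") (simp_all add: gmat_def smooth_g smooth_const)
  qed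
  ultimately show ?thesis
    using smooth_on_U_cong_open[OF open_U cramer] smooth_divide[OF open_U nz] by blast
qed

lemma smooth_christoffel: "smooth_on_U U (christoffel g a b c)"
  unfolding christoffel_def[abs_def]
  using open_U smooth_ginv smooth_g
  by (intro smooth_cmult smooth_sum smooth_mult smooth_add smooth_diff smooth_pd ballI) auto

lemma smooth_riemann_up: "smooth_on_U U (riemann_up g a b c d)"
  unfolding riemann_up_def[abs_def]
  using open_U smooth_christoffel
  by (intro smooth_sum smooth_mult smooth_add smooth_diff smooth_pd ballI) auto

lemma smooth_ricci: "smooth_on_U U (ricci g b d)"
  unfolding ricci_def[abs_def] using open_U smooth_riemann_up by (simp add: smooth_sum)

lemma smooth_scalar_curv: "smooth_on_U U (scalar_curv g)"
  unfolding scalar_curv_def[abs_def] using open_U smooth_ricci smooth_ginv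
  by (simp add: smooth_sum smooth_mult)

lemma christoffel_sym: "y \<in> U \<Longrightarrow> christoffel g a b c y = christoffel g a c b y"
  unfolding christoffel_def using pd_metric_sym by (simp add: algebra_simps)

lemma christoffel_lowered:
  assumes "y \<in> U"
  shows "(\<Sum>e\<in>UNIV. christoffel g e c a y * g e b y)
       = (1/2) * (pd c (g b a) y + pd a (g b c) y - pd b (g c a) y)"
proof -
  define X where "X f = pd c (g f a) y + pd a (g f c) y - pd f (g c a) y" for f
  have sr: "semi_riemannian_at g y" using semi_riemannian assms .
  have "(\<Sum>e\<in>UNIV. christoffel g e c a y * g e b y)
      = (\<Sum>e\<in>UNIV. \<Sum>f\<in>UNIV. (1/2) * X f * (ginv g e f y * g e b y))"
    unfolding christoffel_def X_def by (simp add: sum_distrib_left sum_distrib_right mult_ac)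
  also have "\<dots> = (\<Sum>f\<in>UNIV. (1/2) * X f * (\<Sum>e\<in>UNIV. ginv g f e y * g e b y))"
    by (subst sum.swap) (simp add: ginv_sym[OF sr] sum_distrib_left)
  also have "\<dots> = (1/2) * X b"
    by (simp add: ginv_mult_metric[OF sr] if_distrib if_distribR cong: if_cong)
  finally show ?thesis unfolding X_def .
qed

lemma pd_metric_christoffel:
  assumes "y \<in> U"
  shows "pd c (g a b) y = (\<Sum>e\<in>UNIV. christoffel g e c a y * g e b y + christoffel g e c b y * g a e y)"
proof -
  have "(\<Sum>e\<in>UNIV. christoffel g e c b y * g a e y) = (\<Sum>e\<in>UNIV. christoffel g e c b y * g e a y)"
    using metric_sym[OF assms] by simp
  then show ?thesis
    using christoffel_lowered[OF assms, of c a b] christoffel_lowered[OF assms, of c b a]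
      pd_metric_sym[OF assms]
    by (simp add: sum.distrib algebra_simps)
qed

end

section \<open>Covariant derivatives and the Bianchi identity\<close>

text \<open>\<open>cov_deriv_1_3 g T x e a b c d\<close> is \<open>\<nabla>\<^sub>e T\<^sup>a\<^sub>b\<^sub>c\<^sub>d\<close> and \<open>cov_deriv_0_2 g F x c d b\<close>
  is \<open>\<nabla>\<^sub>c F\<^sub>d\<^sub>b\<close>, both at the point \<open>x\<close>.\<close>

definition cov_deriv_1_3 ::
    "('n::finite) metric \<Rightarrow> ('n \<Rightarrow> 'n \<Rightarrow> 'n \<Rightarrow> 'n \<Rightarrow> 'n field) \<Rightarrow> real^'n \<Rightarrow> 'n \<Rightarrow> 'n \<Rightarrow> 'n \<Rightarrow> 'n \<Rightarrow> 'n \<Rightarrow> real"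
  where
  "cov_deriv_1_3 g T x e a b c d = pd e (T a b c d) x
     + (\<Sum>f\<in>UNIV. christoffel g a e f x * T f b c d x)
     - (\<Sum>f\<in>UNIV. T a f c d x * christoffel g f e b x)
     - (\<Sum>f\<in>UNIV. christoffel g f e c x * T a b f d x)
     - (\<Sum>f\<in>UNIV. christoffel g f e d x * T a b c f x)"

definition cov_deriv_0_2 :: "('n::finite) metric \<Rightarrow> 'n metric \<Rightarrow> real^'n \<Rightarrow> 'n \<Rightarrow> 'n \<Rightarrow> 'n \<Rightarrow> real" where
  "cov_deriv_0_2 g F x c d b = pd c (F d b) x
     - (\<Sum>f\<in>UNIV. christoffel g f c d x * F f b x)
     - (\<Sum>f\<in>UNIV. christoffel g f c b x * F d f x)"

lemma riemann_up_antisym: "riemann_up g a b c d x = - riemann_up g a b d c x"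
  unfolding riemann_up_def by (simp add: sum_subtractf algebra_simps)

lemma ricci_eq_neg_sum_riemann_up: "ricci g b d y = - (\<Sum>a\<in>UNIV. riemann_up g a b d a y)"
  unfolding ricci_def using riemann_up_antisym[of g _ b d] by (simp add: sum_negf[symmetric])

locale smooth_metric_at = smooth_metric +
  fixes x :: "real^'n" assumes x_in_U: "x \<in> U"
begin

lemma differentiable_at_x: "smooth_on_U U F \<Longrightarrow> F differentiable (at x)"
  using smooth_imp_differentiable open_U x_in_U by blast

lemma pd_riemann_up:
  "pd e (riemann_up g a b c d) x =
     pd e (pd c (christoffel g a d b)) x - pd e (pd d (christoffel g a c b)) x
     + (\<Sum>f\<in>UNIV. pd e (christoffel g a c f) x * christoffel g f d b x
          + christoffel g a c f x * pd e (christoffel g f d b) x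
          - pd e (christoffel g a d f) x * christoffel g f c b x
          - christoffel g a d f x * pd e (christoffel g f c b) x)"
proof -
  let ?A = "pd c (christoffel g a d b)" and ?B = "pd d (christoffel g a c b)"
  let ?P = "\<lambda>p q r s y. christoffel g a p q y * christoffel g q r s y"
  let ?t = "\<lambda>f y. ?P c f d b y - ?P d f c b y"
  have sA: "smooth_on_U U ?A" and sB: "smooth_on_U U ?B"
    using smooth_pd smooth_christoffel by blast+
  have sP: "smooth_on_U U (?P p q r s)" for p q r s
    using smooth_mult[OF open_U smooth_christoffel smooth_christoffel] .
  have st: "smooth_on_U U (?t f)" for f
    using smooth_diff[OF open_U sP sP] .
  have "pd e (riemann_up g a b c d) x = pd e (\<lambda>y. (?A y - ?B y) + (\<Sum>f\<in>UNIV. ?t f y)) x"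
    unfolding riemann_up_def[abs_def] by simp
  also have "\<dots> = pd e ?A x - pd e ?B x + (\<Sum>f\<in>UNIV. pd e (?t f) x)"
    using smooth_diff[OF open_U sA sB] smooth_sum[OF open_U, of UNIV ?t] st
    by (simp add: pd_add pd_diff pd_sum differentiable_at_x sA sB)
  also have "(\<Sum>f\<in>UNIV. pd e (?t f) x) = (\<Sum>f\<in>UNIV. pd e (christoffel g a c f) x * christoffel g f d b x
          + christoffel g a c f x * pd e (christoffel g f d b) x
          - pd e (christoffel g a d f) x * christoffel g f c b x
          - christoffel g a d f x * pd e (christoffel g f c b) x)"
    using sP by (simp add: pd_diff pd_mult differentiable_at_x smooth_christoffel algebra_simps)
  finally show ?thesis .
qed

text \<open>In the expansion of \<open>\<nabla>\<^sub>p R\<^sup>a\<^sub>b\<^sub>q\<^sub>r\<close> at \<open>x\<close>, the second derivatives of \<open>\<Gamma>\<close>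
  are symmetric by Schwarz, the terms with \<open>\<Gamma>\<^sup>f\<^sub>p\<^sub>q\<close> in front of \<open>R\<close> are symmetric
  since the connection is torsion-free, and everything else cancels in the cyclic sum.\<close>

lemma second_bianchi:
  "cov_deriv_1_3 g (riemann_up g) x e a b c d + cov_deriv_1_3 g (riemann_up g) x c a b d e
   + cov_deriv_1_3 g (riemann_up g) x d a b e c = 0"
proof -
  define G where "G p q r = christoffel g p q r x" for p q r
  define dG where "dG p q r s = pd p (christoffel g q r s) x" for p q r s
  define ddG where "ddG p q r = pd p (pd q (christoffel g a r b)) x" for p q r
  define dG_G where "dG_G p q r = (\<Sum>f\<in>UNIV. dG p a q f * G f r b)" for p q r
  define G_dG where "G_dG p q r = (\<Sum>f\<in>UNIV. G a q f * dG p f r b)" for p q r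
  define GGG where "GGG p q r = (\<Sum>f\<in>UNIV. \<Sum>h\<in>UNIV. G a p f * G f q h * G h r b)" for p q r
  define GR where "GR p q r = (\<Sum>f\<in>UNIV. G f p q * riemann_up g a b f r x)" for p q r
  have R: "riemann_up g p q r s x = dG r p s q - dG s p r q
      + (\<Sum>h\<in>UNIV. G p r h * G h s q - G p s h * G h r q)" for p q r s
    unfolding riemann_up_def dG_def G_def by simp
  have dR: "pd p (riemann_up g a b q r) x
      = ddG p q r - ddG p r q + dG_G p q r + G_dG p q r - dG_G p r q - G_dG p r q" for p q r
    unfolding pd_riemann_up ddG_def dG_G_def G_dG_def dG_def G_def
    by (simp add: sum.distrib sum_subtractf)
  have GR_left: "(\<Sum>f\<in>UNIV. G a p f * riemann_up g f b q r x)
      = G_dG q p r - G_dG r p q + GGG p q r - GGG p r q" for p q r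
    unfolding R G_dG_def GGG_def
    by (simp add: ring_distribs sum.distrib sum_subtractf sum_distrib_left mult_ac)
  have GGG_swap: "(\<Sum>f\<in>UNIV. \<Sum>h\<in>UNIV. G a q h * G h r f * G f p b) = GGG q r p" for p q r
    unfolding GGG_def by (rule sum.swap)
  have GR_right: "(\<Sum>f\<in>UNIV. riemann_up g a f q r x * G f p b)
      = dG_G q r p - dG_G r q p + GGG q r p - GGG r q p" for p q r
  proof -
    have "(\<Sum>f\<in>UNIV. riemann_up g a f q r x * G f p b)
       = dG_G q r p - dG_G r q p + (\<Sum>f\<in>UNIV. \<Sum>h\<in>UNIV. G a q h * G h r f * G f p b)
           - (\<Sum>f\<in>UNIV. \<Sum>h\<in>UNIV. G a r h * G h q f * G f p b)"
      unfolding R dG_G_def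
      by (simp add: ring_distribs sum.distrib sum_subtractf sum_distrib_right sum_distrib_left mult_ac)
    then show ?thesis using GGG_swap[of q r p] GGG_swap[of r q p] by simp
  qed
  have ddG_sym: "ddG p q r = ddG q p r" for p q r
    unfolding ddG_def using pd_commute[OF open_U x_in_U smooth_christoffel] by simp
  have GR_sym: "GR p q r = GR q p r" for p q r
    unfolding GR_def G_def using christoffel_sym[OF x_in_U] by simp
  have GR_antisym: "(\<Sum>f\<in>UNIV. G f p q * riemann_up g a b r f x) = - GR p q r" for p q r
    unfolding GR_def using riemann_up_antisym[of g a b r _ x] by (simp add: sum_negf[symmetric])
  have expand: "cov_deriv_1_3 g (riemann_up g) x p a b q r =
      (ddG p q r - ddG p r q + dG_G p q r + G_dG p q r - dG_G p r q - G_dG p r q)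
      + (G_dG q p r - G_dG r p q + GGG p q r - GGG p r q)
      - (dG_G q r p - dG_G r q p + GGG q r p - GGG r q p) - GR p q r + GR p r q" for p q r
    unfolding cov_deriv_1_3_def dR GR_left[unfolded G_def] GR_right[unfolded G_def]
      GR_antisym[unfolded G_def, of p r q]
    using GR_antisym[of p r q] by (simp add: GR_def G_def)
  show ?thesis unfolding expand using ddG_sym GR_sym by (smt (verit))
qed

lemma pd_sum_riemann_up:
  "(\<Sum>a\<in>(UNIV::'n set). pd p (riemann_up g (h a) b (k1 a) (k2 a)) x)
   = pd p (\<lambda>y. \<Sum>a\<in>(UNIV::'n set). riemann_up g (h a) b (k1 a) (k2 a) y) x"
  by (rule pd_sum[symmetric]) (auto intro: differentiable_at_x smooth_riemann_up)

lemma contract_bianchi_last: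
  "(\<Sum>a\<in>UNIV. cov_deriv_1_3 g (riemann_up g) x p a b d a) = - cov_deriv_0_2 g (ricci g) x p b d"
proof -
  have ricci_fun: "(\<lambda>y. \<Sum>a\<in>UNIV. riemann_up g a b d a y) = (\<lambda>y. (-1) * ricci g b d y)"
    by (simp add: ricci_eq_neg_sum_riemann_up)
  have s1: "(\<Sum>a\<in>UNIV. pd p (riemann_up g a b d a) x) = - pd p (ricci g b d) x"
    using pd_sum_riemann_up[of p "\<lambda>a. a" b "\<lambda>_. d" "\<lambda>a. a"]
      pd_cmult[OF differentiable_at_x[OF smooth_ricci], of p "-1" b d]
    unfolding ricci_fun by simp
  have s2: "(\<Sum>a\<in>UNIV. \<Sum>f\<in>UNIV. christoffel g a p f x * riemann_up g f b d a x)
      = (\<Sum>a\<in>UNIV. \<Sum>f\<in>UNIV. christoffel g f p a x * riemann_up g a b d f x)"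
    by (rule sum.swap)
  have s3: "(\<Sum>a\<in>UNIV. \<Sum>f\<in>UNIV. riemann_up g a f d a x * christoffel g f p b x)
      = - (\<Sum>f\<in>UNIV. christoffel g f p b x * ricci g f d x)"
    by (subst sum.swap)
      (simp add: ricci_eq_neg_sum_riemann_up sum_negf sum_distrib_left sum_distrib_right mult_ac)
  have s4: "(\<Sum>a\<in>UNIV. \<Sum>f\<in>UNIV. christoffel g f p d x * riemann_up g a b f a x)
      = - (\<Sum>f\<in>UNIV. christoffel g f p d x * ricci g b f x)"
    by (subst sum.swap) (simp add: ricci_eq_neg_sum_riemann_up sum_negf sum_distrib_left)
  show ?thesis
    unfolding cov_deriv_1_3_def cov_deriv_0_2_def using s1 s2 s3 s4
    by (simp add: sum_subtractf sum.distrib)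
qed

lemma contract_bianchi_middle:
  "(\<Sum>a\<in>UNIV. cov_deriv_1_3 g (riemann_up g) x p a b a q) = cov_deriv_0_2 g (ricci g) x p b q"
proof -
  have s1: "(\<Sum>a\<in>UNIV. pd p (riemann_up g a b a q) x) = pd p (ricci g b q) x"
    using pd_sum_riemann_up[of p "\<lambda>a. a" b "\<lambda>a. a" "\<lambda>_. q"] by (simp add: ricci_def[abs_def])
  have s2: "(\<Sum>a\<in>UNIV. \<Sum>f\<in>UNIV. christoffel g a p f x * riemann_up g f b a q x)
      = (\<Sum>a\<in>UNIV. \<Sum>f\<in>UNIV. christoffel g f p a x * riemann_up g a b f q x)"
    by (rule sum.swap)
  have s3: "(\<Sum>a\<in>UNIV. \<Sum>f\<in>UNIV. riemann_up g a f a q x * christoffel g f p b x)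
      = (\<Sum>f\<in>UNIV. christoffel g f p b x * ricci g f q x)"
    by (subst sum.swap) (simp add: ricci_def sum_distrib_left sum_distrib_right mult_ac)
  have s4: "(\<Sum>a\<in>UNIV. \<Sum>f\<in>UNIV. christoffel g f p q x * riemann_up g a b a f x)
      = (\<Sum>f\<in>UNIV. christoffel g f p q x * ricci g b f x)"
    by (subst sum.swap) (simp add: ricci_def sum_distrib_left sum_distrib_right mult_ac)
  show ?thesis
    unfolding cov_deriv_1_3_def cov_deriv_0_2_def using s1 s2 s3 s4
    by (simp add: sum_subtractf sum.distrib)
qed

lemma contracted_bianchi:
  "(\<Sum>a\<in>UNIV. cov_deriv_1_3 g (riemann_up g) x a a b c d)
   = cov_deriv_0_2 g (ricci g) x c b d - cov_deriv_0_2 g (ricci g) x d b c"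
proof -
  have "(\<Sum>a\<in>UNIV. cov_deriv_1_3 g (riemann_up g) x a a b c d + cov_deriv_1_3 g (riemann_up g) x c a b d a
      + cov_deriv_1_3 g (riemann_up g) x d a b a c) = 0"
    using second_bianchi by simp
  then show ?thesis
    using contract_bianchi_last[of c b d] contract_bianchi_middle[of d b c] by (simp add: sum.distrib)
qed

end

section \<open>Conformally flat curvature\<close>

definition delta_wedge :: "('n::finite) metric \<Rightarrow> 'n \<Rightarrow> 'n \<Rightarrow> 'n \<Rightarrow> 'n \<Rightarrow> 'n field" where
  "delta_wedge H a b c d = (\<lambda>y. (if a = c then 1 else 0) * H d b y - (if a = d then 1 else 0) * H c b y)"

definition metric_wedge :: "('n::finite) metric \<Rightarrow> 'n metric \<Rightarrow> 'n \<Rightarrow> 'n \<Rightarrow> 'n \<Rightarrow> 'n \<Rightarrow> 'n field" where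
  "metric_wedge g Q a b c d = (\<lambda>y. g b c y * Q a d y - g b d y * Q a c y)"

text \<open>When the Weyl tensor vanishes,
  \<open>R\<^sup>a\<^sub>b\<^sub>c\<^sub>d = \<delta>\<^sup>a\<^sub>c H\<^sub>d\<^sub>b - \<delta>\<^sup>a\<^sub>d H\<^sub>c\<^sub>b + g\<^sub>b\<^sub>c Q\<^sup>a\<^sub>d - g\<^sub>b\<^sub>d Q\<^sup>a\<^sub>c\<close>
  with the following \<open>H\<close> and \<open>Q\<close>, both built from the Ricci tensor.\<close>

definition trace_part_H :: "('n::finite) metric \<Rightarrow> 'n metric" where
  "trace_part_H g p q y = (1 / (real CARD('n) - 2)) * ricci g p q y
     + (- scalar_curv g y / ((real CARD('n) - 1) * (real CARD('n) - 2))) * g p q y"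

definition trace_part_Q :: "('n::finite) metric \<Rightarrow> 'n metric" where
  "trace_part_Q g p q y = - (\<Sum>e\<in>UNIV. ginv g p e y * ricci g q e y) / (real CARD('n) - 2)"

definition divergence_1_1 :: "('n::finite) metric \<Rightarrow> 'n metric \<Rightarrow> real^'n \<Rightarrow> 'n \<Rightarrow> real" where
  "divergence_1_1 g Q x p = (\<Sum>a\<in>UNIV. pd a (Q a p) x + (\<Sum>f\<in>UNIV. christoffel g a a f x * Q f p x)
      - (\<Sum>f\<in>UNIV. christoffel g f a p x * Q a f x))"

lemma riemann_up_eq_trace_part:
  fixes g :: "('n::finite) metric"
  assumes sr: "semi_riemannian_at g y" and n3: "CARD('n) \<ge> 3"
    and weyl0: "\<forall>a b c d. weyl g a b c d y = 0"
  shows "riemann_up g a b c d y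
    = delta_wedge (trace_part_H g) a b c d y + metric_wedge g (trace_part_Q g) a b c d y"
proof -
  let ?n = "real CARD('n)"
  have n2: "?n - 2 \<noteq> 0" and n1: "?n - 1 \<noteq> 0" using n3 by auto
  define s where "s = scalar_curv g y / ((?n - 1) * (?n - 2))"
  define \<alpha>1 where "\<alpha>1 = ricci g d b y / (?n - 2) - s * g d b y"
  define \<alpha>2 where "\<alpha>2 = - (ricci g c b y / (?n - 2) - s * g c b y)"
  define \<beta>1 where "\<beta>1 = - g b c y / (?n - 2)"
  define \<beta>2 where "\<beta>2 = g b d y / (?n - 2)"
  have lowered: "riemann g e b c d y
      = \<alpha>1 * g e c y + \<alpha>2 * g e d y + \<beta>1 * ricci g d e y + \<beta>2 * ricci g c e y" for e
  proof -
    have "weyl g e b c d y = 0" using weyl0 by blast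
    then have "riemann g e b c d y
        = (g e c y * ricci g d b y - g e d y * ricci g c b y - g b c y * ricci g d e y
            + g b d y * ricci g c e y) / (?n - 2)
          - scalar_curv g y * (g e c y * g d b y - g e d y * g c b y) / ((?n - 1) * (?n - 2))"
      unfolding weyl_def Let_def by simp
    moreover have "R = (Rdb/k - S/(m*k)*Gdb)*Gec + (-(Rcb/k - S/(m*k)*Gcb))*Ged + (-Gbc/k)*Rde + (Gbd/k)*Rce"
      if "R = (Gec*Rdb - Ged*Rcb - Gbc*Rde + Gbd*Rce) / k - S*(Gec*Gdb - Ged*Gcb) / (m*k)"
        "k \<noteq> 0" "m \<noteq> 0" for k m R Gec Ged Gbc Gbd Gdb Gcb Rdb Rcb Rde Rce S :: real
      unfolding that(1) using that(2,3) by (simp add: field_simps)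
    ultimately show ?thesis
      unfolding \<alpha>1_def \<alpha>2_def \<beta>1_def \<beta>2_def s_def using n1 n2 by blast
  qed
  have "riemann_up g a b c d y = (\<Sum>e\<in>UNIV. ginv g a e y
      * (\<alpha>1 * g e c y + \<alpha>2 * g e d y + \<beta>1 * ricci g d e y + \<beta>2 * ricci g c e y))"
    unfolding riemann_up_eq_ginv_riemann[OF sr] lowered ..
  also have "\<dots> = \<alpha>1 * (\<Sum>e\<in>UNIV. ginv g a e y * g e c y) + \<alpha>2 * (\<Sum>e\<in>UNIV. ginv g a e y * g e d y)
      + \<beta>1 * (\<Sum>e\<in>UNIV. ginv g a e y * ricci g d e y) + \<beta>2 * (\<Sum>e\<in>UNIV. ginv g a e y * ricci g c e y)"
    by (simp add: sum.distrib sum_distrib_left algebra_simps)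
  finally show ?thesis
    unfolding ginv_mult_metric[OF sr] \<alpha>1_def \<alpha>2_def \<beta>1_def \<beta>2_def s_def
      delta_wedge_def metric_wedge_def trace_part_H_def trace_part_Q_def
    by (simp add: algebra_simps)
qed

context smooth_metric
begin

lemma smooth_trace_part_H: "smooth_on_U U (trace_part_H g p q)"
  unfolding trace_part_H_def[abs_def] divide_inverse
  by (intro smooth_add[OF open_U] smooth_mult[OF open_U] smooth_minus[OF open_U]
      smooth_const smooth_ricci smooth_g smooth_scalar_curv)

lemma smooth_trace_part_Q: "smooth_on_U U (trace_part_Q g p q)"
  unfolding trace_part_Q_def[abs_def] divide_inverse
  by (intro smooth_mult[OF open_U] smooth_minus[OF open_U] smooth_sum[OF open_U]
      smooth_const smooth_ginv smooth_ricci ballI) auto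

end

context smooth_metric_at
begin

lemma cov_deriv_1_3_cong:
  assumes "\<forall>a b c d. \<forall>y\<in>U. T a b c d y = T' a b c d y"
  shows "cov_deriv_1_3 g T x e a b c d = cov_deriv_1_3 g T' x e a b c d"
proof -
  have "pd e (T a b c d) x = pd e (T' a b c d) x"
    by (rule pd_cong_open[OF open_U x_in_U]) (use assms in auto)
  moreover have "T p q r s x = T' p q r s x" for p q r s using assms x_in_U by blast
  ultimately show ?thesis unfolding cov_deriv_1_3_def by simp
qed

lemma cov_deriv_1_3_add:
  assumes "\<forall>a b c d. smooth_on_U U (T1 a b c d)" "\<forall>a b c d. smooth_on_U U (T2 a b c d)"
  shows "cov_deriv_1_3 g (\<lambda>a b c d y. T1 a b c d y + T2 a b c d y) x e a b c d
       = cov_deriv_1_3 g T1 x e a b c d + cov_deriv_1_3 g T2 x e a b c d"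
  unfolding cov_deriv_1_3_def using pd_add[OF differentiable_at_x differentiable_at_x] assms
  by (simp add: sum.distrib algebra_simps)

lemma divergence_delta_wedge:
  assumes sH: "\<forall>p q. smooth_on_U U (H p q)"
  shows "(\<Sum>a\<in>UNIV. cov_deriv_1_3 g (delta_wedge H) x a a b c d)
       = cov_deriv_0_2 g H x c d b - cov_deriv_0_2 g H x d c b"
proof -
  let ?tr = "\<lambda>p. \<Sum>a\<in>UNIV. christoffel g a a p x"
  have pd_wedge: "pd a (delta_wedge H a b c d) x
      = (if a = c then 1 else 0) * pd a (H d b) x - (if a = d then 1 else 0) * pd a (H c b) x" for a
    unfolding delta_wedge_def using sH
    by (simp add: pd_diff pd_cmult differentiable_at_x smooth_cmult[OF open_U])
  have q1: "(\<Sum>a\<in>UNIV. pd a (delta_wedge H a b c d) x) = pd c (H d b) x - pd d (H c b) x"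
    unfolding pd_wedge by (simp add: sum_subtractf delta_simps)
  have q2: "(\<Sum>a\<in>UNIV. \<Sum>f\<in>UNIV. christoffel g a a f x * delta_wedge H f b c d x)
     = ?tr c * H d b x - ?tr d * H c b x"
    unfolding delta_wedge_def by (simp add: right_diff_distrib sum_subtractf delta_simps sum_distrib_right)
  have q3: "(\<Sum>a\<in>UNIV. \<Sum>f\<in>UNIV. delta_wedge H a f c d x * christoffel g f a b x)
     = (\<Sum>f\<in>UNIV. H d f x * christoffel g f c b x) - (\<Sum>f\<in>UNIV. H c f x * christoffel g f d b x)"
    unfolding delta_wedge_def by (subst sum.swap) (simp add: left_diff_distrib sum_subtractf delta_simps)
  have q4: "(\<Sum>a\<in>UNIV. \<Sum>f\<in>UNIV. christoffel g f a c x * delta_wedge H a b f d x)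
     = ?tr c * H d b x - (\<Sum>f\<in>UNIV. christoffel g f d c x * H f b x)"
    unfolding delta_wedge_def by (simp add: right_diff_distrib sum_subtractf delta_simps sum_distrib_right)
  have q5: "(\<Sum>a\<in>UNIV. \<Sum>f\<in>UNIV. christoffel g f a d x * delta_wedge H a b c f x)
     = (\<Sum>f\<in>UNIV. christoffel g f c d x * H f b x) - ?tr d * H c b x"
    unfolding delta_wedge_def by (simp add: right_diff_distrib sum_subtractf delta_simps sum_distrib_right)
  have "(\<Sum>a\<in>UNIV. cov_deriv_1_3 g (delta_wedge H) x a a b c d) =
      pd c (H d b) x - pd d (H c b) x + (?tr c * H d b x - ?tr d * H c b x)
      - ((\<Sum>f\<in>UNIV. H d f x * christoffel g f c b x) - (\<Sum>f\<in>UNIV. H c f x * christoffel g f d b x))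
      - (?tr c * H d b x - (\<Sum>f\<in>UNIV. christoffel g f d c x * H f b x))
      - ((\<Sum>f\<in>UNIV. christoffel g f c d x * H f b x) - ?tr d * H c b x)"
    unfolding cov_deriv_1_3_def sum_subtractf sum.distrib q1 q2 q3 q4 q5 ..
  also have "\<dots> = cov_deriv_0_2 g H x c d b - cov_deriv_0_2 g H x d c b"
    unfolding cov_deriv_0_2_def using christoffel_sym[OF x_in_U] by (simp add: sum_subtractf algebra_simps)
  finally show ?thesis .
qed

lemma divergence_metric_wedge:
  assumes sQ: "\<forall>p q. smooth_on_U U (Q p q)"
  shows "(\<Sum>a\<in>UNIV. cov_deriv_1_3 g (metric_wedge g Q) x a a b c d)
       = g b c x * divergence_1_1 g Q x d - g b d x * divergence_1_1 g Q x c"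
proof -
  let ?G = "\<lambda>p q r. christoffel g p q r x"
  define A1 where "A1 = (\<Sum>a\<in>UNIV. \<Sum>f\<in>UNIV. ?G f a b * g f c x * Q a d x)"
  define A2 where "A2 = (\<Sum>a\<in>UNIV. \<Sum>f\<in>UNIV. ?G f a c * g b f x * Q a d x)"
  define A3 where "A3 = (\<Sum>a\<in>UNIV. \<Sum>f\<in>UNIV. ?G f a b * g f d x * Q a c x)"
  define A4 where "A4 = (\<Sum>a\<in>UNIV. \<Sum>f\<in>UNIV. ?G f a d * g b f x * Q a c x)"
  define B1 where "B1 = (\<Sum>a\<in>UNIV. pd a (Q a d) x)"
  define B2 where "B2 = (\<Sum>a\<in>UNIV. pd a (Q a c) x)"
  define C1 where "C1 = (\<Sum>a\<in>UNIV. \<Sum>f\<in>UNIV. ?G a a f * Q f d x)"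
  define C2 where "C2 = (\<Sum>a\<in>UNIV. \<Sum>f\<in>UNIV. ?G a a f * Q f c x)"
  define E1 where "E1 = (\<Sum>a\<in>UNIV. \<Sum>f\<in>UNIV. ?G f a c * Q a f x)"
  define E2 where "E2 = (\<Sum>a\<in>UNIV. \<Sum>f\<in>UNIV. ?G f a d * Q a f x)"
  have pd_wedge: "pd a (metric_wedge g Q a b c d) x
      = (g b c x * pd a (Q a d) x + pd a (g b c) x * Q a d x)
       - (g b d x * pd a (Q a c) x + pd a (g b d) x * Q a c x)" for a
    unfolding metric_wedge_def using sQ
    by (simp add: pd_diff pd_mult differentiable_at_x smooth_mult[OF open_U] smooth_g)
  have r1: "(\<Sum>a\<in>UNIV. pd a (metric_wedge g Q a b c d) x) = A1 + A2 + g b c x * B1 - A3 - A4 - g b d x * B2"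
    unfolding pd_wedge pd_metric_christoffel[OF x_in_U] A1_def A2_def A3_def A4_def B1_def B2_def
    using metric_sym[OF x_in_U]
    by (simp add: algebra_simps sum_subtractf sum.distrib sum_distrib_left sum_distrib_right)
  have r2: "(\<Sum>a\<in>UNIV. \<Sum>f\<in>UNIV. ?G a a f * metric_wedge g Q f b c d x) = g b c x * C1 - g b d x * C2"
    unfolding metric_wedge_def C1_def C2_def
    by (simp add: algebra_simps sum_subtractf sum.distrib sum_distrib_left sum_distrib_right)
  have r3: "(\<Sum>a\<in>UNIV. \<Sum>f\<in>UNIV. metric_wedge g Q a f c d x * ?G f a b) = A1 - A3"
    unfolding metric_wedge_def A1_def A3_def
    by (simp add: algebra_simps sum_subtractf sum.distrib sum_distrib_left sum_distrib_right)
  have r4: "(\<Sum>a\<in>UNIV. \<Sum>f\<in>UNIV. ?G f a c * metric_wedge g Q a b f d x) = A2 - g b d x * E1"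
    unfolding metric_wedge_def A2_def E1_def
    by (simp add: algebra_simps sum_subtractf sum.distrib sum_distrib_left sum_distrib_right)
  have r5: "(\<Sum>a\<in>UNIV. \<Sum>f\<in>UNIV. ?G f a d * metric_wedge g Q a b c f x) = g b c x * E2 - A4"
    unfolding metric_wedge_def A4_def E2_def
    by (simp add: algebra_simps sum_subtractf sum.distrib sum_distrib_left sum_distrib_right)
  have div_d: "divergence_1_1 g Q x d = B1 + C1 - E2" and div_c: "divergence_1_1 g Q x c = B2 + C2 - E1"
    unfolding divergence_1_1_def B1_def C1_def E2_def B2_def C2_def E1_def
    by (simp_all add: sum.distrib sum_subtractf)
  have "(\<Sum>a\<in>UNIV. cov_deriv_1_3 g (metric_wedge g Q) x a a b c d)
     = (A1 + A2 + g b c x * B1 - A3 - A4 - g b d x * B2) + (g b c x * C1 - g b d x * C2)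
       - (A1 - A3) - (A2 - g b d x * E1) - (g b c x * E2 - A4)"
    unfolding cov_deriv_1_3_def sum_subtractf sum.distrib r1 r2 r3 r4 r5 ..
  then show ?thesis unfolding div_d div_c by (simp add: algebra_simps)
qed

lemma divergence_riemann_up_trace_part:
  assumes "CARD('n) \<ge> 3" and "\<forall>y\<in>U. \<forall>a b c d. weyl g a b c d y = 0"
  shows "(\<Sum>a\<in>UNIV. cov_deriv_1_3 g (riemann_up g) x a a b c d)
     = cov_deriv_0_2 g (trace_part_H g) x c d b - cov_deriv_0_2 g (trace_part_H g) x d c b
       + (g b c x * divergence_1_1 g (trace_part_Q g) x d - g b d x * divergence_1_1 g (trace_part_Q g) x c)"
proof -
  have sH: "\<forall>p q. smooth_on_U U (trace_part_H g p q)"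
    and sQ: "\<forall>p q. smooth_on_U U (trace_part_Q g p q)"
    using smooth_trace_part_H smooth_trace_part_Q by blast+
  let ?T = "\<lambda>a b c d y. delta_wedge (trace_part_H g) a b c d y + metric_wedge g (trace_part_Q g) a b c d y"
  have sD: "\<forall>a b c d. smooth_on_U U (delta_wedge (trace_part_H g) a b c d)"
    unfolding delta_wedge_def using sH by (intro allI smooth_diff[OF open_U] smooth_cmult[OF open_U]) auto
  have sM: "\<forall>a b c d. smooth_on_U U (metric_wedge g (trace_part_Q g) a b c d)"
    unfolding metric_wedge_def using sQ smooth_g
    by (intro allI smooth_diff[OF open_U] smooth_mult[OF open_U]) auto
  have "\<forall>a b c d. \<forall>y\<in>U. riemann_up g a b c d y = ?T a b c d y"
    using riemann_up_eq_trace_part semi_riemannian assms by blast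
  then have "(\<Sum>a\<in>UNIV. cov_deriv_1_3 g (riemann_up g) x a a b c d)
      = (\<Sum>a\<in>UNIV. cov_deriv_1_3 g ?T x a a b c d)"
    by (intro sum.cong refl cov_deriv_1_3_cong)
  also have "\<dots> = (\<Sum>a\<in>UNIV. cov_deriv_1_3 g (delta_wedge (trace_part_H g)) x a a b c d)
      + (\<Sum>a\<in>UNIV. cov_deriv_1_3 g (metric_wedge g (trace_part_Q g)) x a a b c d)"
    unfolding cov_deriv_1_3_add[OF sD sM] sum.distrib ..
  finally show ?thesis
    unfolding divergence_delta_wedge[OF sH] divergence_metric_wedge[OF sQ] .
qed

end

section \<open>The antisymmetrised derivative of a symmetric tensor along a frame\<close>

definition cov_curl_along ::
    "('n::finite) metric \<Rightarrow> 'n metric \<Rightarrow> real^'n \<Rightarrow> real^'n \<Rightarrow> real^'n \<Rightarrow> real^'n \<Rightarrow> real" where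
  "cov_curl_along g F x W A B = (\<Sum>b\<in>UNIV. \<Sum>c\<in>UNIV. \<Sum>d\<in>UNIV.
     W$b * A$c * B$d * (cov_deriv_0_2 g F x c d b - cov_deriv_0_2 g F x d c b))"

text \<open>The factor \<open>\<eta>\<close> is not assumed to be differentiable; near \<open>x\<close>, where \<open>w \<noteq> 0\<close>,
  the product \<open>\<eta> w v\<close> equals the smooth quotient \<open>(\<eta> w w) v / w\<close>.\<close>

lemma pd_mult_nonsmooth_factor:
  fixes ev hv v w :: "real^'n::finite \<Rightarrow> real"
  assumes U: "open U" "x \<in> U"
    and smooth: "smooth_on_U U ev" "smooth_on_U U hv" "smooth_on_U U v" "smooth_on_U U w"
    and ev: "\<forall>y\<in>U. ev y = \<eta> y * w y * v y" and hv: "\<forall>y\<in>U. hv y = \<eta> y * w y * w y"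
    and at_x: "w x = 1" "v x = 0"
  shows "pd c ev x = \<eta> x * pd c v x"
proof -
  define V where "V = w -` (UNIV - {0}) \<inter> U"
  have "open V" unfolding V_def
    using continuous_on_open_vimage[OF U(1)] smooth_imp_continuous_on[OF smooth(4)] by blast
  moreover have "x \<in> V" unfolding V_def using at_x U by simp
  moreover have "\<forall>y\<in>V. ev y = (hv y * v y) * inverse (w y)"
    using ev hv unfolding V_def by (auto simp: field_simps)
  ultimately have "pd c ev x = pd c (\<lambda>y. (hv y * v y) * inverse (w y)) x"
    by (rule pd_cong_open)
  also have "\<dots> = (hv x * v x) * pd c (\<lambda>y. inverse (w y)) x + pd c (\<lambda>y. hv y * v y) x * inverse (w x)"
    using smooth_imp_differentiable[OF smooth_mult[OF U(1) smooth(2,3)] U]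
      differentiable_inverse[OF smooth_imp_differentiable[OF smooth(4) U]] at_x
    by (simp add: pd_mult)
  also have "\<dots> = hv x * pd c v x"
    using pd_mult[OF smooth_imp_differentiable[OF smooth(2) U] smooth_imp_differentiable[OF smooth(3) U]] at_x
    by simp
  finally show ?thesis using hv U(2) at_x by simp
qed

context smooth_metric_at
begin

lemma cov_deriv_0_2_cong:
  assumes "\<forall>p q. \<forall>y\<in>U. F p q y = F' p q y"
  shows "cov_deriv_0_2 g F x c d b = cov_deriv_0_2 g F' x c d b"
proof -
  have "pd c (F d b) x = pd c (F' d b) x"
    by (rule pd_cong_open[OF open_U x_in_U]) (use assms in auto)
  moreover have "F p q x = F' p q x" for p q using assms x_in_U by blast
  ultimately show ?thesis unfolding cov_deriv_0_2_def by simp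
qed

lemma cov_deriv_0_2_add:
  assumes "\<forall>p q. smooth_on_U U (F1 p q)" "\<forall>p q. smooth_on_U U (F2 p q)"
  shows "cov_deriv_0_2 g (\<lambda>p q y. F1 p q y + F2 p q y) x c d b
       = cov_deriv_0_2 g F1 x c d b + cov_deriv_0_2 g F2 x c d b"
  unfolding cov_deriv_0_2_def using pd_add[OF differentiable_at_x differentiable_at_x] assms
  by (simp add: sum.distrib algebra_simps)

lemma cov_deriv_0_2_cmult:
  assumes "\<forall>p q. smooth_on_U U (F p q)"
  shows "cov_deriv_0_2 g (\<lambda>p q y. k * F p q y) x c d b = k * cov_deriv_0_2 g F x c d b"
  unfolding cov_deriv_0_2_def using pd_cmult[OF differentiable_at_x] assms
  by (simp add: sum_distrib_left algebra_simps)

lemma cov_deriv_0_2_sym: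
  assumes "\<forall>y\<in>U. \<forall>p q. F p q y = F q p y"
  shows "cov_deriv_0_2 g F x c d b = cov_deriv_0_2 g F x c b d"
proof -
  have "pd c (F d b) x = pd c (F b d) x"
    by (rule pd_cong_open[OF open_U x_in_U]) (use assms in auto)
  then show ?thesis unfolding cov_deriv_0_2_def using assms x_in_U by (simp add: algebra_simps)
qed

lemma cov_deriv_0_2_conformal:
  assumes "smooth_on_U U \<phi>"
  shows "cov_deriv_0_2 g (\<lambda>p q y. \<phi> y * g p q y) x c d b = pd c \<phi> x * g d b x"
proof -
  have "pd c (\<lambda>y. \<phi> y * g d b y) x = \<phi> x * pd c (g d b) x + pd c \<phi> x * g d b x"
    using pd_mult[OF differentiable_at_x[OF assms] differentiable_at_x[OF smooth_g]] .
  then show ?thesis unfolding cov_deriv_0_2_def pd_metric_christoffel[OF x_in_U]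
    using metric_sym[OF x_in_U] by (simp add: sum.distrib sum_distrib_left algebra_simps)
qed

lemma cov_curl_along_cong:
  assumes "\<forall>p q. \<forall>y\<in>U. F p q y = F' p q y"
  shows "cov_curl_along g F x W A B = cov_curl_along g F' x W A B"
  unfolding cov_curl_along_def using cov_deriv_0_2_cong[OF assms] by simp

lemma cov_curl_along_add:
  assumes "\<forall>p q. smooth_on_U U (F1 p q)" "\<forall>p q. smooth_on_U U (F2 p q)"
  shows "cov_curl_along g (\<lambda>p q y. F1 p q y + F2 p q y) x W A B
       = cov_curl_along g F1 x W A B + cov_curl_along g F2 x W A B"
  unfolding cov_curl_along_def cov_deriv_0_2_add[OF assms]
  by (simp add: ring_distribs sum.distrib sum_subtractf)

lemma cov_curl_along_cmult:
  assumes "\<forall>p q. smooth_on_U U (F p q)"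
  shows "cov_curl_along g (\<lambda>p q y. k * F p q y) x W A B = k * cov_curl_along g F x W A B"
  unfolding cov_curl_along_def cov_deriv_0_2_cmult[OF assms]
  by (simp add: algebra_simps sum_distrib_left)

lemma contract_metric_terms_orthogonal:
  assumes "gdot g x W A = 0" "gdot g x W B = 0"
  shows "(\<Sum>b\<in>UNIV. \<Sum>c\<in>UNIV. \<Sum>d\<in>UNIV. W$b * A$c * B$d * (g b c x * Z d - g b d x * Z c)) = 0"
proof -
  have "(\<Sum>c\<in>UNIV. \<Sum>d\<in>UNIV. W$b * A$c * B$d * (g b c x * Z d - g b d x * Z c))
     = (\<Sum>c\<in>UNIV. g b c x * W$b * A$c) * (\<Sum>d\<in>UNIV. B$d * Z d)
       - (\<Sum>c\<in>UNIV. A$c * Z c) * (\<Sum>d\<in>UNIV. g b d x * W$b * B$d)" for b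
    unfolding sum_product by (simp add: sum_subtractf algebra_simps)
  moreover have "(\<Sum>b\<in>UNIV. X b * S1 - S2 * Y b) = (\<Sum>b\<in>UNIV. X b) * S1 - S2 * (\<Sum>b\<in>UNIV. Y b)"
    for X Y :: "'n \<Rightarrow> real" and S1 S2
    by (simp add: sum_subtractf sum_distrib_left sum_distrib_right)
  ultimately have "(\<Sum>b\<in>UNIV. \<Sum>c\<in>UNIV. \<Sum>d\<in>UNIV. W$b * A$c * B$d * (g b c x * Z d - g b d x * Z c))
     = gdot g x W A * (\<Sum>d\<in>UNIV. B$d * Z d) - (\<Sum>c\<in>UNIV. A$c * Z c) * gdot g x W B"
    unfolding gdot_def by presburger
  then show ?thesis using assms by simp
qed

lemma cov_curl_along_conformal:
  assumes "smooth_on_U U \<phi>" "gdot g x W A = 0" "gdot g x W B = 0"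
  shows "cov_curl_along g (\<lambda>p q y. \<phi> y * g p q y) x W A B = 0"
proof -
  have "cov_curl_along g (\<lambda>p q y. \<phi> y * g p q y) x W A B = (\<Sum>b\<in>UNIV. \<Sum>c\<in>UNIV. \<Sum>d\<in>UNIV.
      W$b * A$c * B$d * (g b c x * (- pd d \<phi> x) - g b d x * (- pd c \<phi> x)))"
    unfolding cov_curl_along_def cov_deriv_0_2_conformal[OF assms(1)]
    using metric_sym[OF x_in_U] by (simp add: algebra_simps)
  also have "\<dots> = 0" by (rule contract_metric_terms_orthogonal[OF assms(2,3)])
  finally show ?thesis .
qed

text \<open>The contracted Bianchi identity makes the Ricci curl equal to that of
  \<open>trace_part_H\<close>, which is \<open>1 / (n - 2)\<close> times the Ricci curl plus a conformal term.\<close>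

lemma cov_curl_along_ricci_conformally_flat:
  assumes n4: "CARD('n) \<ge> 4"
    and weyl0: "\<forall>y\<in>U. \<forall>a b c d. weyl g a b c d y = 0"
    and ricci_sym: "\<forall>y\<in>U. \<forall>a b. ricci g a b y = ricci g b a y"
    and orth: "gdot g x W A = 0" "gdot g x W B = 0"
  shows "cov_curl_along g (ricci g) x W A B = 0"
proof -
  let ?n = "real CARD('n)" and ?H = "trace_part_H g" and ?Z = "divergence_1_1 g (trace_part_Q g) x"
  have "cov_deriv_0_2 g (ricci g) x c d b - cov_deriv_0_2 g (ricci g) x d c b
      = cov_deriv_0_2 g ?H x c d b - cov_deriv_0_2 g ?H x d c b + (g b c x * ?Z d - g b d x * ?Z c)"
    for b c d
    using contracted_bianchi[of b c d] divergence_riemann_up_trace_part[of b c d] n4 weyl0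
      cov_deriv_0_2_sym[OF ricci_sym] by simp
  then have "cov_curl_along g (ricci g) x W A B = cov_curl_along g ?H x W A B
      + (\<Sum>b\<in>UNIV. \<Sum>c\<in>UNIV. \<Sum>d\<in>UNIV. W$b * A$c * B$d * (g b c x * ?Z d - g b d x * ?Z c))"
    unfolding cov_curl_along_def by (simp add: ring_distribs sum.distrib sum_subtractf)
  also have "\<dots> = cov_curl_along g ?H x W A B"
    using contract_metric_terms_orthogonal[OF orth] by simp
  also have "\<dots> = (1 / (?n - 2)) * cov_curl_along g (ricci g) x W A B"
  proof -
    let ?s = "\<lambda>y. - scalar_curv g y / ((?n - 1) * (?n - 2))"
    have s_s: "smooth_on_U U ?s"
      unfolding divide_inverse
      by (intro smooth_mult[OF open_U] smooth_minus[OF open_U] smooth_scalar_curv smooth_const)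
    have s_ricci: "\<forall>p q. smooth_on_U U (\<lambda>y. 1 / (?n - 2) * ricci g p q y)"
      using smooth_cmult[OF open_U smooth_ricci] by blast
    have s_conf: "\<forall>p q. smooth_on_U U (\<lambda>y. ?s y * g p q y)"
      using smooth_mult[OF open_U s_s smooth_g] by blast
    show ?thesis
      unfolding trace_part_H_def[abs_def] cov_curl_along_add[OF s_ricci s_conf]
        cov_curl_along_cmult[OF allI[OF allI[OF smooth_ricci]]] cov_curl_along_conformal[OF s_s orth]
      by simp
  qed
  finally show ?thesis using n4 by (simp add: field_simps)
qed

lemma pd_contract_rank_one:
  assumes sF: "\<forall>p q. smooth_on_U U (F p q)" and sl: "\<forall>p. smooth_on_U U (l p)"
    and F: "\<forall>y\<in>U. \<forall>p q. F p q y = \<eta> y * l p y * l q y"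
    and lV: "(\<Sum>d\<in>UNIV. V$d * l d x) = 0" and lW: "(\<Sum>b\<in>UNIV. W$b * l b x) = 1"
  shows "(\<Sum>b\<in>UNIV. \<Sum>d\<in>UNIV. W$b * V$d * pd c (F d b) x)
       = \<eta> x * (\<Sum>d\<in>UNIV. V$d * pd c (l d) x)"
proof -
  define F_VW where "F_VW y = (\<Sum>d\<in>UNIV. \<Sum>b\<in>UNIV. V$d * W$b * F d b y)" for y
  define F_WW where "F_WW y = (\<Sum>d\<in>UNIV. \<Sum>b\<in>UNIV. W$d * W$b * F d b y)" for y
  define l_V where "l_V y = (\<Sum>d\<in>UNIV. V$d * l d y)" for y
  define l_W where "l_W y = (\<Sum>b\<in>UNIV. W$b * l b y)" for y
  have smooth_term: "smooth_on_U U (\<lambda>y. V$d * W$b * F d b y)" for V W d b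
    using smooth_cmult[OF open_U] sF by blast
  have smooth_F_contraction: "smooth_on_U U (\<lambda>y. \<Sum>d\<in>UNIV. \<Sum>b\<in>UNIV. V$d * W$b * F d b y)" for V W
    by (intro smooth_sum[OF open_U] ballI smooth_term) simp_all
  have smooth_l_contraction: "smooth_on_U U (\<lambda>y. \<Sum>d\<in>UNIV. V$d * l d y)" for V
    by (intro smooth_sum[OF open_U] ballI smooth_cmult[OF open_U]) (use sl in auto)
  have rank_one: "(\<Sum>d\<in>UNIV. \<Sum>b\<in>UNIV. P$d * Q$b * F d b y)
      = \<eta> y * (\<Sum>d\<in>UNIV. P$d * l d y) * (\<Sum>b\<in>UNIV. Q$b * l b y)" if "y \<in> U" for P Q y
  proof -
    have "(\<Sum>d\<in>UNIV. \<Sum>b\<in>UNIV. P$d * Q$b * F d b y)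
        = (\<Sum>d\<in>UNIV. \<Sum>b\<in>UNIV. \<eta> y * ((P$d * l d y) * (Q$b * l b y)))"
      using F that by (simp add: mult_ac)
    then show ?thesis unfolding sum_product by (simp add: sum_distrib_left mult_ac)
  qed
  have F_VW_eq: "\<forall>y\<in>U. F_VW y = \<eta> y * l_W y * l_V y"
    and F_WW_eq: "\<forall>y\<in>U. F_WW y = \<eta> y * l_W y * l_W y"
    unfolding F_VW_def F_WW_def l_V_def l_W_def using rank_one by simp_all
  have pd_F_VW: "pd c F_VW x = \<eta> x * pd c l_V x"
    by (rule pd_mult_nonsmooth_factor[OF open_U x_in_U _ _ _ _ F_VW_eq F_WW_eq])
      (use smooth_F_contraction smooth_l_contraction lV lW
        in \<open>simp_all add: F_VW_def F_WW_def l_V_def l_W_def\<close>)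
  have "pd c F_VW x = (\<Sum>d\<in>UNIV. \<Sum>b\<in>UNIV. V$d * W$b * pd c (F d b) x)"
    unfolding F_VW_def[abs_def] using smooth_term sF
    by (simp add: pd_sum pd_cmult differentiable_at_x smooth_sum[OF open_U] mult.assoc)
  moreover have "pd c l_V x = (\<Sum>d\<in>UNIV. V$d * pd c (l d) x)"
    unfolding l_V_def[abs_def] using sl
    by (simp add: pd_sum pd_cmult differentiable_at_x smooth_cmult[OF open_U])
  ultimately show ?thesis
    using pd_F_VW by (subst sum.swap) (simp add: mult_ac)
qed

lemma contract_cov_deriv_0_2_rank_one:
  assumes sF: "\<forall>p q. smooth_on_U U (F p q)" and sl: "\<forall>p. smooth_on_U U (l p)"
    and F: "\<forall>y\<in>U. \<forall>p q. F p q y = \<eta> y * l p y * l q y"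
    and lV: "(\<Sum>d\<in>UNIV. V$d * l d x) = 0" and lW: "(\<Sum>b\<in>UNIV. W$b * l b x) = 1"
  shows "(\<Sum>b\<in>UNIV. \<Sum>d\<in>UNIV. W$b * V$d * cov_deriv_0_2 g F x c d b)
       = \<eta> x * (\<Sum>d\<in>UNIV. V$d * cov_deriv g l c d x)"
proof -
  have derivative_term: "(\<Sum>b\<in>UNIV. \<Sum>d\<in>UNIV. W$b * V$d * pd c (F d b) x)
      = \<eta> x * (\<Sum>d\<in>UNIV. V$d * pd c (l d) x)"
    by (rule pd_contract_rank_one[OF sF sl F lV lW])
  have Fx: "F p q x = \<eta> x * l p x * l q x" for p q using F x_in_U by blast
  have christoffel_term_1: "(\<Sum>b\<in>UNIV. \<Sum>d\<in>UNIV. W$b * V$d * (\<Sum>f\<in>UNIV. christoffel g f c d x * F f b x))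
      = \<eta> x * (\<Sum>d\<in>UNIV. V$d * (\<Sum>f\<in>UNIV. christoffel g f c d x * l f x))"
  proof -
    have "(\<Sum>b\<in>UNIV. \<Sum>d\<in>UNIV. W$b * V$d * (\<Sum>f\<in>UNIV. christoffel g f c d x * F f b x))
        = (\<Sum>b\<in>UNIV. (W$b * l b x) * (\<eta> x * (\<Sum>d\<in>UNIV. V$d * (\<Sum>f\<in>UNIV. christoffel g f c d x * l f x))))"
      unfolding Fx by (simp add: sum_distrib_left mult_ac)
    then show ?thesis using lW by (simp add: sum_distrib_right[symmetric])
  qed
  have christoffel_term_2: "(\<Sum>b\<in>UNIV. \<Sum>d\<in>UNIV. W$b * V$d * (\<Sum>f\<in>UNIV. christoffel g f c b x * F d f x)) = 0"
  proof -
    have "(\<Sum>b\<in>UNIV. \<Sum>d\<in>UNIV. W$b * V$d * (\<Sum>f\<in>UNIV. christoffel g f c b x * F d f x))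
        = (\<Sum>b\<in>UNIV. \<Sum>d\<in>UNIV. (V$d * l d x) * (W$b * \<eta> x * (\<Sum>f\<in>UNIV. christoffel g f c b x * l f x)))"
      unfolding Fx by (simp add: sum_distrib_left mult_ac)
    then show ?thesis using lV by (simp add: sum_distrib_right[symmetric])
  qed
  have "(\<Sum>b\<in>UNIV. \<Sum>d\<in>UNIV. W$b * V$d * cov_deriv_0_2 g F x c d b)
      = (\<Sum>b\<in>UNIV. \<Sum>d\<in>UNIV. W$b * V$d * pd c (F d b) x)
        - (\<Sum>b\<in>UNIV. \<Sum>d\<in>UNIV. W$b * V$d * (\<Sum>f\<in>UNIV. christoffel g f c d x * F f b x))
        - (\<Sum>b\<in>UNIV. \<Sum>d\<in>UNIV. W$b * V$d * (\<Sum>f\<in>UNIV. christoffel g f c b x * F d f x))"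
    unfolding cov_deriv_0_2_def by (simp add: right_diff_distrib sum_subtractf)
  also have "\<dots> = \<eta> x * (\<Sum>d\<in>UNIV. V$d * cov_deriv g l c d x)"
    unfolding derivative_term christoffel_term_1 christoffel_term_2 cov_deriv_def
    by (simp add: right_diff_distrib sum_subtractf mult_ac)
  finally show ?thesis .
qed

lemma cov_curl_along_rank_one:
  assumes sF: "\<forall>p q. smooth_on_U U (F p q)" and sl: "\<forall>p. smooth_on_U U (l p)"
    and F: "\<forall>y\<in>U. \<forall>p q. F p q y = \<eta> y * l p y * l q y"
    and lA: "(\<Sum>d\<in>UNIV. A$d * l d x) = 0" and lB: "(\<Sum>d\<in>UNIV. B$d * l d x) = 0"
    and lW: "(\<Sum>b\<in>UNIV. W$b * l b x) = 1"
  shows "cov_curl_along g F x W A B = \<eta> x * ((\<Sum>c\<in>UNIV. \<Sum>d\<in>UNIV. A$c * B$d * cov_deriv g l c d x)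
      - (\<Sum>c\<in>UNIV. \<Sum>d\<in>UNIV. B$c * A$d * cov_deriv g l c d x))"
proof -
  have contract: "(\<Sum>b\<in>UNIV. \<Sum>c\<in>UNIV. \<Sum>d\<in>UNIV. W$b * P$c * V$d * cov_deriv_0_2 g F x c d b)
      = \<eta> x * (\<Sum>c\<in>UNIV. \<Sum>d\<in>UNIV. P$c * V$d * cov_deriv g l c d x)"
    if lV: "(\<Sum>d\<in>UNIV. V$d * l d x) = 0" for P V
  proof -
    have "(\<Sum>b\<in>UNIV. \<Sum>c\<in>UNIV. \<Sum>d\<in>UNIV. W$b * P$c * V$d * cov_deriv_0_2 g F x c d b)
        = (\<Sum>c\<in>UNIV. P$c * (\<Sum>b\<in>UNIV. \<Sum>d\<in>UNIV. W$b * V$d * cov_deriv_0_2 g F x c d b))"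
      by (subst sum.swap) (simp add: sum_distrib_left mult_ac)
    then show ?thesis
      unfolding contract_cov_deriv_0_2_rank_one[OF sF sl F lV lW] by (simp add: sum_distrib_left mult_ac)
  qed
  have "(\<Sum>b\<in>UNIV. \<Sum>c\<in>UNIV. \<Sum>d\<in>UNIV. W$b * A$c * B$d * cov_deriv_0_2 g F x d c b)
      = (\<Sum>b\<in>UNIV. \<Sum>d\<in>UNIV. \<Sum>c\<in>UNIV. W$b * B$d * A$c * cov_deriv_0_2 g F x d c b)"
    by (rule sum.cong[OF refl], subst sum.swap) (simp add: mult_ac)
  then show ?thesis
    unfolding cov_curl_along_def right_diff_distrib sum_subtractf contract[OF lB] contract[OF lA] by simp
qed

lemma cov_curl_along_ricci_pure_radiation:
  assumes s\<phi>: "smooth_on_U U \<phi>" and sl: "\<forall>p. smooth_on_U U (l p)"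
    and ricci: "\<forall>y\<in>U. \<forall>p q. ricci g p q y = \<phi> y * g p q y + \<eta> y * l p y * l q y"
    and lA: "(\<Sum>d\<in>UNIV. A$d * l d x) = 0" and lB: "(\<Sum>d\<in>UNIV. B$d * l d x) = 0"
    and lW: "(\<Sum>b\<in>UNIV. W$b * l b x) = 1"
    and orth: "gdot g x W A = 0" "gdot g x W B = 0"
  shows "cov_curl_along g (ricci g) x W A B = \<eta> x * ((\<Sum>c\<in>UNIV. \<Sum>d\<in>UNIV. A$c * B$d * cov_deriv g l c d x)
      - (\<Sum>c\<in>UNIV. \<Sum>d\<in>UNIV. B$c * A$d * cov_deriv g l c d x))"
proof -
  define E where "E p q y = ricci g p q y + (- \<phi> y) * g p q y" for p q y
  have sm\<phi>: "\<forall>p q. smooth_on_U U (\<lambda>y. \<phi> y * g p q y)"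
    using smooth_mult[OF open_U s\<phi> smooth_g] by blast
  have sE: "\<forall>p q. smooth_on_U U (E p q)"
    unfolding E_def[abs_def]
    by (intro allI smooth_add[OF open_U] smooth_mult[OF open_U] smooth_minus[OF open_U] smooth_ricci
        smooth_g s\<phi>)
  have "cov_curl_along g (ricci g) x W A B = cov_curl_along g (\<lambda>p q y. \<phi> y * g p q y + E p q y) x W A B"
    by (rule cov_curl_along_cong) (simp add: E_def)
  also have "\<dots> = cov_curl_along g E x W A B"
    unfolding cov_curl_along_add[OF sm\<phi> sE] cov_curl_along_conformal[OF s\<phi> orth] by simp
  also have "\<dots> = \<eta> x * ((\<Sum>c\<in>UNIV. \<Sum>d\<in>UNIV. A$c * B$d * cov_deriv g l c d x)
      - (\<Sum>c\<in>UNIV. \<Sum>d\<in>UNIV. B$c * A$d * cov_deriv g l c d x))"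
    by (rule cov_curl_along_rank_one[OF sE sl _ lA lB lW]) (simp add: E_def ricci)
  finally show ?thesis .
qed

end

lemma optical_matrix_eq_sum:
  "optical_matrix g l x M i j = (\<Sum>c\<in>UNIV. \<Sum>d\<in>UNIV. M j$c * M i$d * cov_deriv g l c d x)"
  unfolding optical_matrix_def by (subst sum.swap) (simp add: mult_ac)

theorem mainTheorem7:
  fixes g :: "('n::finite) metric" and l :: "'n \<Rightarrow> 'n field"
    and lam eta :: "'n field" and U :: "(real^'n) set"
  assumes "CARD('n) \<ge> 4"
    and "open U" and "U \<noteq> {}"
    and "\<forall>a b. smooth_on_U U (g a b)"
    and "\<forall>x\<in>U. lorentzian_at g x"
    and "\<forall>a. smooth_on_U U (l a)"
    and "\<forall>x\<in>U. raise g l x \<noteq> 0 \<and> gdot g x (raise g l x) (raise g l x) = 0"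
    and "\<forall>x\<in>U. eta x \<noteq> 0"
    and "\<forall>x\<in>U. \<forall>a b. ricci g a b x = lam x * g a b x + eta x * l a x * l b x"
    and "conformally_flat_on g U"
  shows "\<forall>x\<in>U. \<not> twisting_at g l x"
proof (intro ballI notI)
  fix x assume x: "x \<in> U" and "twisting_at g l x"
  then obtain N M i j where frame: "null_frame g x (raise g l x) N M"
    and ij: "i < CARD('n) - 2" "j < CARD('n) - 2"
    and twist: "optical_matrix g l x M i j \<noteq> optical_matrix g l x M j i"
    unfolding twisting_at_def by blast
  interpret smooth_metric_at g U x
    using assms(2,4,5) x by unfold_locales (simp_all add: lorentzian_imp_semi_riemannian)
  have l_frame: "(\<Sum>b\<in>UNIV. N$b * l b x) = 1" "(\<Sum>b\<in>UNIV. M i$b * l b x) = 0"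
      "(\<Sum>b\<in>UNIV. M j$b * l b x) = 0"
    and orth: "gdot g x N (M i) = 0" "gdot g x N (M j) = 0"
    using frame ij gdot_raise[OF semi_riemannian[OF x]] unfolding null_frame_def by auto
  have ricci: "\<forall>y\<in>U. \<forall>a b. ricci g a b y
      = scalar_curv g y / real CARD('n) * g a b y + eta y * l a y * l b y"
  proof -
    have "lam y = scalar_curv g y / real CARD('n)" if "y \<in> U" for y
      using scalar_curv_ricci_null[OF semi_riemannian[OF that], of l "lam y" "eta y"]
        assms(1,7,9) that by simp
    then show ?thesis using assms(9) by simp
  qed
  have "cov_curl_along g (ricci g) x N (M i) (M j) = 0"
    using cov_curl_along_ricci_conformally_flat[OF assms(1) _ _ orth] assms(10) ricci metric_sym
    unfolding conformally_flat_on_def by (simp add: mult_ac)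
  moreover have "cov_curl_along g (ricci g) x N (M i) (M j)
      = eta x * (optical_matrix g l x M j i - optical_matrix g l x M i j)"
    using cov_curl_along_ricci_pure_radiation[OF _ assms(6) ricci l_frame(2,3,1) orth]
      smooth_divide[OF open_U _ smooth_scalar_curv smooth_const] assms(1)
    unfolding optical_matrix_eq_sum by simp
  ultimately show False using twist assms(8) x by simp
qed

end
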